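(* Let $x(n)$ be the Pólya urn process on $H$. Almost surely, the limit set of $(x(n))_{n\ge0}$ (its set of accumulation points) is a connected subset of $\Lambda$.
   Context: Let $H=(V,E)$ be a finite hypergraph with vertex set $V=[m]=\{1,\dots,m\}$ and a set $E$ of $N\ge 1$ hyperedges (nonempty subsets of $[m]$), such that every vertex belongs to at least one hyperedge. Pólya urn on $H$: initially vertex $i$ holds $B_i(0)\ge 1$ balls; $N_0=\sum_{i=1}^m B_i(0)$. At each step $n\ge 1$, for each hyperedge $I\in E$ (independently across hyperedges, conditionally on the past) one ball is added to a vertex $i\in I$ chosen with probability $B_i(n-1)/\sum_{j\in I}B_j(n-1)$, where $B_i(n)$ denotes the number of balls at vertex $i$ after step $n$. Put $x_i(n)=B_i(n)/(N_0+nN)$ and $x(n)=(x_1(n),\dots,x_m(n))$. For $v\in\mathbb R^m$ and $I\in E$, $v_I=\sum_{i\in I}v_i$. Fix $0<c<1/N$ and let $\Delta=\{x\in\mathbb R^m: x_i\ge0,\ \sum_i x_i=1,\ x_I\ge c\ \forall I\in E\}$. $F:\Delta\to\mathbb R^m$, $F_i(v)=-v_i+\frac1N\sum_{I\ni i}\frac{v_i}{v_I}$, and $\Lambda=\{v\in\Delta:F(v)=0\}$. *)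

theory Defs
  imports "HOL-Probability.Probability"
begin

text \<open>Vertices of the hypergraph are the elements of a finite type 'v (so m = CARD('v));
hyperedges form a set E of nonempty subsets of UNIV :: 'v set.
A history of choices is a function h :: nat \<Rightarrow> 'v set \<Rightarrow> 'v, where h n I is the vertex
of hyperedge I receiving the ball at step n (n \<ge> 1).\<close>

fun urn_count :: "('v \<Rightarrow> nat) \<Rightarrow> 'v set set \<Rightarrow> (nat \<Rightarrow> 'v set \<Rightarrow> 'v) \<Rightarrow> nat \<Rightarrow> 'v \<Rightarrow> nat" where
  "urn_count B0 E h 0 i = B0 i"
| "urn_count B0 E h (Suc n) i = urn_count B0 E h n i + card {I \<in> E. h (Suc n) I = i}"

text \<open>Probability under the P\'olya urn dynamics that the choices at steps 1..n are those
prescribed by the history h: at step k, independently over hyperedges I, vertex i \<in> I is chosen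
with probability B_i(k-1) / sum_{j\<in>I} B_j(k-1).\<close>
definition urn_path_prob :: "('v \<Rightarrow> nat) \<Rightarrow> 'v set set \<Rightarrow> (nat \<Rightarrow> 'v set \<Rightarrow> 'v) \<Rightarrow> nat \<Rightarrow> real" where
  "urn_path_prob B0 E h n =
     (\<Prod>k\<in>{1..n}. \<Prod>I\<in>E.
        (if h k I \<in> I
         then real (urn_count B0 E h (k - 1) (h k I)) / real (\<Sum>j\<in>I. urn_count B0 E h (k - 1) j)
         else 0))"

definition urn_x :: "('v::finite \<Rightarrow> nat) \<Rightarrow> 'v set set \<Rightarrow> (nat \<Rightarrow> 'v set \<Rightarrow> 'v) \<Rightarrow> nat \<Rightarrow> real ^ 'v" where
  "urn_x B0 E h n = (\<chi> i. real (urn_count B0 E h n i) / (real (\<Sum>j\<in>UNIV. B0 j) + real n * real (card E)))"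

definition vsum :: "real ^ 'v \<Rightarrow> 'v set \<Rightarrow> real" where
  "vsum v I = (\<Sum>i\<in>I. v $ i)"

definition Delta :: "'v set set \<Rightarrow> real \<Rightarrow> (real ^ 'v::finite) set" where
  "Delta E c = {x. (\<forall>i. x $ i \<ge> 0) \<and> (\<Sum>i\<in>UNIV. x $ i) = 1 \<and> (\<forall>I\<in>E. vsum x I \<ge> c)}"

definition urnF :: "'v set set \<Rightarrow> real ^ 'v \<Rightarrow> real ^ 'v" where
  "urnF E v = (\<chi> i. - v $ i + (1 / real (card E)) * (\<Sum>I\<in>{I\<in>E. i \<in> I}. v $ i / vsum v I))"

definition Lambda :: "'v set set \<Rightarrow> real \<Rightarrow> (real ^ 'v::finite) set" where
  "Lambda E c = {v \<in> Delta E c. urnF E v = 0}"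

definition limit_set :: "(nat \<Rightarrow> 'a::topological_space) \<Rightarrow> 'a set" where
  "limit_set X = {p. \<exists>r. strict_mono r \<and> (X \<circ> r) \<longlonglongrightarrow> p}"

end

theory Submission
  imports Defs
begin

text \<open>Along the urn, \<open>L(x) = \<Sum>\<^sub>I ln x\<^sub>I\<close> increases in expectation: one step changes it by
  \<open>(g(x) + \<xi>) / t\<^sub>n\<^sub>+\<^sub>1 + O(1/t\<^sub>n\<^sub>+\<^sub>1\<^sup>2)\<close>, where \<open>t\<^sub>n = N\<^sub>0 + n N\<close>, \<open>g \<ge> 0\<close> is a variance vanishing
  exactly at the zeros of \<open>F\<close>, and \<open>\<xi>\<close> is a bounded martingale increment. As \<open>L \<le> 0\<close> and
  \<open>\<Sum> 1/t\<^sub>n\<^sup>2 < \<infinity>\<close>, Chebyshev's inequality for the square-integrable martingale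
  \<open>\<Sum> \<xi>\<^sub>k / t\<^sub>k\<^sub>+\<^sub>1\<close> shows that almost surely \<open>\<Sum> g(x(k)) / t\<^sub>k\<^sub>+\<^sub>1 < \<infinity>\<close>. Since \<open>\<Sum> 1/t\<^sub>n = \<infinity>\<close>
  and the steps of \<open>x\<close> are \<open>O(1/t\<^sub>n)\<close>, the path cannot accumulate where \<open>g > 0\<close>, so every limit
  point lies in \<open>\<Lambda>\<close>; the limit set is connected because the steps tend to \<open>0\<close>.\<close>

section \<open>Limit sets of sequences\<close>

lemma limit_set_imp_frequently_near:
  fixes X :: "nat \<Rightarrow> 'a::metric_space"
  assumes "p \<in> limit_set X" and "e > 0"
  shows "\<exists>\<^sub>F n in sequentially. dist (X n) p < e"
  unfolding frequently_sequentially
proof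
  fix m
  obtain r where r: "strict_mono r" "(X \<circ> r) \<longlonglongrightarrow> p"
    using assms(1) unfolding limit_set_def by auto
  then obtain k0 where k0: "\<And>k. k \<ge> k0 \<Longrightarrow> dist (X (r k)) p < e"
    using assms(2) unfolding LIMSEQ_def by auto
  have "r (max k0 m) \<ge> m"
    using seq_suble[OF r(1), of "max k0 m"] by linarith
  then show "\<exists>n\<ge>m. dist (X n) p < e"
    using k0[of "max k0 m"] by auto
qed

lemma frequently_near_imp_limit_set:
  fixes X :: "nat \<Rightarrow> 'a::metric_space"
  assumes near: "\<And>e. e > 0 \<Longrightarrow> \<exists>\<^sub>F n in sequentially. dist (X n) p < e"
  shows "p \<in> limit_set X"
proof -
  define f where "f k i = (SOME n. n \<ge> Suc i \<and> dist (X n) p < inverse (real (Suc k)))" for k i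
  have f: "f k i \<ge> Suc i \<and> dist (X (f k i)) p < inverse (real (Suc k))" for k i
    unfolding f_def
    by (rule someI_ex) (use near[of "inverse (real (Suc k))"] in \<open>auto simp: frequently_sequentially\<close>)
  define r where "r = rec_nat (f 0 0) (\<lambda>k i. f (Suc k) i)"
  have r0: "r 0 = f 0 0" and rS: "r (Suc k) = f (Suc k) (r k)" for k
    by (simp_all add: r_def)
  have mono: "strict_mono r"
    unfolding strict_mono_Suc_iff using f rS by (metis Suc_le_lessD)
  have r_near: "dist (X (r k)) p < inverse (real (Suc k))" for k
  proof (cases k)
    case 0 then show ?thesis using f[of 0 0] r0 by simp
  next
    case (Suc k') then show ?thesis using f[where k="Suc k'" and i="r k'"] rS[of k'] by simp
  qed
  have "(X \<circ> r) \<longlonglongrightarrow> p"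
  proof (rule tendsto_dist_iff[THEN iffD2], rule tendsto_sandwich)
    show "\<forall>\<^sub>F k in sequentially. 0 \<le> dist ((X \<circ> r) k) p" by simp
    show "\<forall>\<^sub>F k in sequentially. dist ((X \<circ> r) k) p \<le> inverse (real (Suc k))"
      using r_near by (simp add: less_imp_le)
    show "(\<lambda>k. inverse (real (Suc k))) \<longlonglongrightarrow> 0"
      by (rule LIMSEQ_inverse_real_of_nat)
  qed simp
  with mono show ?thesis
    unfolding limit_set_def by auto
qed

lemma closed_limit_set:
  fixes X :: "nat \<Rightarrow> 'a::metric_space"
  shows "closed (limit_set X)"
  unfolding closed_limpt islimpt_approachable
proof (intro allI impI)
  fix p assume approx: "\<forall>e>0. \<exists>y\<in>limit_set X. y \<noteq> p \<and> dist y p < e"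
  have "\<exists>\<^sub>F n in sequentially. dist (X n) p < e" if "e > 0" for e
  proof -
    obtain y where y: "y \<in> limit_set X" "dist y p < e/2"
      using approx \<open>e > 0\<close> by (meson half_gt_zero)
    have "\<exists>\<^sub>F n in sequentially. dist (X n) y < e/2"
      using y(1) \<open>e > 0\<close> by (intro limit_set_imp_frequently_near) auto
    moreover have "dist (X n) p < e" if "dist (X n) y < e/2" for n
      using dist_triangle[of "X n" p y] that y(2) by linarith
    ultimately show ?thesis
      by (rule frequently_elim1)
  qed
  then show "p \<in> limit_set X"
    by (rule frequently_near_imp_limit_set)
qed

lemma limit_set_meets_closed:
  fixes X :: "nat \<Rightarrow> 'a::heine_borel"
  assumes "bounded (range X)" and "closed C" and "\<exists>\<^sub>F n in sequentially. X n \<in> C"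
  shows "limit_set X \<inter> C \<noteq> {}"
proof -
  have inf: "infinite {n. X n \<in> C}"
    using assms(3) unfolding frequently_sequentially infinite_nat_iff_unbounded_le by auto
  obtain s :: "nat \<Rightarrow> nat" where s: "strict_mono s \<and> (\<forall>k. X (s k) \<in> C)"
    using infinite_enumerate[OF inf] by auto
  have "bounded (range (X \<circ> s))"
    using assms(1) by (rule bounded_subset) auto
  then obtain l r where r: "strict_mono r" "((X \<circ> s) \<circ> r) \<longlonglongrightarrow> l"
    using bounded_imp_convergent_subsequence by blast
  have "\<forall>k. ((X \<circ> s) \<circ> r) k \<in> C"
    using s by simp
  then have "l \<in> C"
    using closed_sequentially[OF assms(2) _ r(2)] by blast
  moreover have "(X \<circ> (s \<circ> r)) \<longlonglongrightarrow> l"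
    using r(2) by (simp add: comp_assoc)
  then have "l \<in> limit_set X"
    unfolding limit_set_def using strict_mono_o[OF conjunct1[OF s] r(1)] by blast
  ultimately show ?thesis by blast
qed

lemma limit_set_subset_closure_range:
  fixes X :: "nat \<Rightarrow> 'a::metric_space"
  shows "limit_set X \<subseteq> closure (range X)"
proof
  fix p assume "p \<in> limit_set X"
  then have "\<exists>n. dist (X n) p < e" if "e > 0" for e
    using limit_set_imp_frequently_near[OF _ that] frequently_ex by blast
  then show "p \<in> closure (range X)"
    unfolding closure_approachable by blast
qed

lemma ex_exit_step:
  fixes P :: "nat \<Rightarrow> bool"
  assumes "P m" "\<not> P n" "m \<le> n"
  shows "\<exists>j. m \<le> j \<and> j < n \<and> P j \<and> \<not> P (Suc j)"
  using assms
proof (induction n)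
  case 0 then show ?case by auto
next
  case (Suc n)
  show ?case
  proof (cases "P n")
    case True then show ?thesis using Suc.prems by (intro exI[of _ n]) (auto simp: le_Suc_eq)
  next
    case False
    then have "m \<le> n" using Suc.prems by (metis le_Suc_eq)
    then show ?thesis using Suc.IH[OF Suc.prems(1) False] by auto
  qed
qed

lemma frequently_in_band:
  fixes u :: "nat \<Rightarrow> real"
  assumes "a > 0"
    and low: "\<exists>\<^sub>F n in sequentially. u n \<le> - a"
    and high: "\<exists>\<^sub>F n in sequentially. u n \<ge> a"
    and steps: "\<forall>\<^sub>F n in sequentially. \<bar>u (Suc n) - u n\<bar> < a"
  shows "\<exists>\<^sub>F n in sequentially. \<bar>u n\<bar> \<le> a"
  unfolding frequently_sequentially
proof
  fix m
  obtain m0 where m0: "\<And>n. n \<ge> m0 \<Longrightarrow> \<bar>u (Suc n) - u n\<bar> < a"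
    using steps unfolding eventually_sequentially by auto
  obtain n1 where n1: "n1 \<ge> max m m0" "u n1 \<le> - a"
    using low unfolding frequently_sequentially by blast
  obtain n2 where n2: "n2 \<ge> n1" "u n2 \<ge> a"
    using high unfolding frequently_sequentially by blast
  obtain j where j: "n1 \<le> j" "u j \<le> - a" "\<not> u (Suc j) \<le> - a"
    using ex_exit_step[of "\<lambda>j. u j \<le> - a" n1 n2] n1 n2 \<open>a > 0\<close> by force
  have "\<bar>u (Suc j) - u j\<bar> < a"
    using m0 j(1) n1(1) by auto
  then show "\<exists>n\<ge>m. \<bar>u n\<bar> \<le> a"
    using j n1(1) by (intro exI[of _ "Suc j"]) auto
qed

lemma separating_function:
  fixes A B :: "'a::heine_borel set"
  assumes "compact A" "closed B" "A \<noteq> {}" "B \<noteq> {}" "A \<inter> B = {}"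
  obtains \<phi> :: "'a \<Rightarrow> real" and d where "d > 0" "continuous_on UNIV \<phi>"
    "\<And>a. a \<in> A \<Longrightarrow> \<phi> a \<le> - d" "\<And>b. b \<in> B \<Longrightarrow> \<phi> b \<ge> d"
    "\<And>y z. \<bar>\<phi> y - \<phi> z\<bar> \<le> 2 * dist y z"
proof -
  obtain d where d: "d > 0" "\<forall>x\<in>A. \<forall>y\<in>B. d \<le> dist x y"
    using separate_compact_closed[of A B] assms by blast
  show ?thesis
  proof (rule that[of d "\<lambda>y. infdist y A - infdist y B"])
    show "continuous_on UNIV (\<lambda>y. infdist y A - infdist y B)"
      by (intro continuous_intros)
    show "infdist a A - infdist a B \<le> - d" if "a \<in> A" for a
    proof -
      have "d \<le> infdist a B"
        unfolding infdist_notempty[OF assms(4)] using d that assms(4) by (intro cINF_greatest) auto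
      then show ?thesis using that by simp
    qed
    show "infdist b A - infdist b B \<ge> d" if "b \<in> B" for b
    proof -
      have "d \<le> infdist b A"
        unfolding infdist_notempty[OF assms(3)] using d that assms(3)
        by (intro cINF_greatest) (auto simp: dist_commute)
      then show ?thesis using that by simp
    qed
    show "\<bar>(infdist y A - infdist y B) - (infdist z A - infdist z B)\<bar> \<le> 2 * dist y z" for y z
      using infdist_triangle_abs[of y A z] infdist_triangle_abs[of y B z] by linarith
  qed (use d in simp)
qed

lemma connected_limit_set:
  fixes X :: "nat \<Rightarrow> 'a::heine_borel"
  assumes bounded: "bounded (range X)"
    and small_steps: "(\<lambda>n. dist (X (Suc n)) (X n)) \<longlonglongrightarrow> 0"
  shows "connected (limit_set X)"
proof (subst connected_closed_set[OF closed_limit_set], rule notI, elim exE conjE)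
  fix A B assume AB: "closed A" "closed B" "A \<noteq> {}" "B \<noteq> {}" "A \<union> B = limit_set X" "A \<inter> B = {}"
  have "bounded A"
    using AB(5) limit_set_subset_closure_range bounded_closure[OF bounded]
    by (metis Un_upper1 bounded_subset)
  then obtain \<phi> d where d: "d > 0" and \<phi>: "continuous_on UNIV \<phi>"
    and \<phi>_A: "\<And>a. a \<in> A \<Longrightarrow> \<phi> a \<le> - d" and \<phi>_B: "\<And>b. b \<in> B \<Longrightarrow> \<phi> b \<ge> d"
    and \<phi>_lip: "\<And>y z. \<bar>\<phi> y - \<phi> z\<bar> \<le> 2 * dist y z"
    using separating_function[of A B] AB compact_eq_bounded_closed by metis
  have near: "\<exists>\<^sub>F n in sequentially. \<bar>\<phi> (X n) - \<phi> p\<bar> < d/2" if "p \<in> A \<union> B" for p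
  proof (rule frequently_elim1[OF limit_set_imp_frequently_near])
    show "\<bar>\<phi> (X n) - \<phi> p\<bar> < d/2" if "dist (X n) p < d/4" for n
      using that \<phi>_lip[of "X n" p] by linarith
  qed (use that AB(5) d in auto)
  obtain a b where a: "a \<in> A" and b: "b \<in> B"
    using AB(3,4) by blast
  have "\<exists>\<^sub>F n in sequentially. \<phi> (X n) \<le> - (d/2)"
  proof (rule frequently_elim1[OF near])
    show "\<phi> (X n) \<le> - (d/2)" if "\<bar>\<phi> (X n) - \<phi> a\<bar> < d/2" for n
      using that \<phi>_A[OF a] unfolding abs_less_iff by linarith
  qed (use a in blast)
  moreover have "\<exists>\<^sub>F n in sequentially. \<phi> (X n) \<ge> d/2"
  proof (rule frequently_elim1[OF near])
    show "\<phi> (X n) \<ge> d/2" if "\<bar>\<phi> (X n) - \<phi> b\<bar> < d/2" for n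
      using that \<phi>_B[OF b] unfolding abs_less_iff by linarith
  qed (use b in blast)
  moreover have "\<forall>\<^sub>F n in sequentially. \<bar>\<phi> (X (Suc n)) - \<phi> (X n)\<bar> < d/2"
  proof (rule eventually_mono[OF order_tendstoD(2)[OF small_steps]])
    show "\<bar>\<phi> (X (Suc n)) - \<phi> (X n)\<bar> < d/2" if "dist (X (Suc n)) (X n) < d/4" for n
      using that \<phi>_lip[of "X (Suc n)" "X n"] by linarith
  qed (use d in simp)
  ultimately have "\<exists>\<^sub>F n in sequentially. X n \<in> {y. \<bar>\<phi> y\<bar> \<le> d/2}"
    using frequently_in_band[of "d/2" "\<lambda>n. \<phi> (X n)"] d by auto
  moreover have "closed {y. \<bar>\<phi> y\<bar> \<le> d/2}"
    using \<phi> by (intro closed_Collect_le continuous_intros)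
  ultimately obtain l where "l \<in> limit_set X" "\<bar>\<phi> l\<bar> \<le> d/2"
    using limit_set_meets_closed[OF bounded] by blast
  then show False
    using AB(5) \<phi>_A \<phi>_B d by force
qed

section \<open>The deterministic ODE argument\<close>

lemma dist_le_sum_steps:
  fixes X :: "nat \<Rightarrow> 'a::metric_space"
  assumes steps: "\<And>k. dist (X (Suc k)) (X k) \<le> D * a k" and "n \<le> j"
  shows "dist (X j) (X n) \<le> D * (\<Sum>k\<in>{n..<j}. a k)"
  using \<open>n \<le> j\<close>
proof (induction j rule: dec_induct)
  case (step j)
  have "dist (X (Suc j)) (X n) \<le> dist (X (Suc j)) (X j) + dist (X j) (X n)"
    by (rule dist_triangle)
  also have "\<dots> \<le> D * a j + D * (\<Sum>k\<in>{n..<j}. a k)"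
    using steps step.IH by (rule add_mono)
  finally show ?case
    using step.hyps by (simp add: distrib_left)
qed simp

lemma not_summable_partial_sums_unbounded:
  fixes a :: "nat \<Rightarrow> real"
  assumes "\<And>k. 0 \<le> a k" and "\<not> summable a"
  shows "\<exists>j\<ge>n. b < (\<Sum>k\<in>{n..<j}. a k)"
proof (rule ccontr)
  assume "\<not> ?thesis"
  then have bound: "(\<Sum>k\<in>{n..<j}. a k) \<le> b" if "j \<ge> n" for j
    using that by (simp add: not_less)
  have "(\<Sum>k\<le>m. a k) \<le> (\<Sum>k<n. a k) + b" for m
  proof (cases "m < n")
    case True
    have "(\<Sum>k\<le>m. a k) \<le> (\<Sum>k<n. a k)"
      using True assms(1) by (intro sum_mono2) auto
    moreover have "0 \<le> b"
      using bound[of n] by simp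
    ultimately show ?thesis by linarith
  next
    case False
    then have "(\<Sum>k\<le>m. a k) = (\<Sum>k<n. a k) + (\<Sum>k\<in>{n..<Suc m}. a k)"
      using sum.atLeastLessThan_concat[of 0 n "Suc m" a]
      by (simp add: atLeast0LessThan lessThan_Suc_atMost)
    then show ?thesis
      using bound[of "Suc m"] False by simp
  qed
  then show False
    using bounded_imp_summable[of a] assms by blast
qed

text \<open>The distance travelled is at most \<open>D\<close> times the sum of the \<open>a k\<close>, and while the path is
  near \<open>p\<close> that sum is at most \<open>1/\<epsilon>\<close> times the weighted sum.\<close>
lemma trapped_near_point:
  fixes X :: "nat \<Rightarrow> 'a::metric_space" and g :: "'a \<Rightarrow> real"
  assumes a_nonneg: "\<And>k. 0 \<le> a k" and "D > 0"
    and steps: "\<And>k. dist (X (Suc k)) (X k) \<le> D * a k"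
    and g_near: "\<And>y. dist y p < \<rho> \<Longrightarrow> g y > \<epsilon>" and "\<epsilon> > 0"
    and start: "dist (X n) p < \<rho> / 2"
    and small: "\<And>j. n \<le> j \<Longrightarrow> (\<Sum>k\<in>{n..<j}. g (X k) * a k) < \<epsilon> * \<rho> / (2 * D)"
    and "n \<le> j"
  shows "dist (X j) p < \<rho> \<and> \<epsilon> * (\<Sum>k\<in>{n..<j}. a k) \<le> (\<Sum>k\<in>{n..<j}. g (X k) * a k)"
  using \<open>n \<le> j\<close>
proof (induction j rule: dec_induct)
  case base
  have "dist (X n) p < \<rho>"
    using start zero_le_dist[of "X n" p] by linarith
  then show ?case by simp
next
  case (step j)
  have "\<epsilon> * a j \<le> g (X j) * a j"
    using g_near[of "X j"] step.IH a_nonneg[of j] by (intro mult_right_mono) auto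
  then have sum_le: "\<epsilon> * (\<Sum>k\<in>{n..<Suc j}. a k) \<le> (\<Sum>k\<in>{n..<Suc j}. g (X k) * a k)"
    using step.IH step.hyps by (simp add: distrib_left)
  also have "\<dots> < \<epsilon> * \<rho> / (2 * D)"
    using small[of "Suc j"] step.hyps by simp
  finally have "D * (\<Sum>k\<in>{n..<Suc j}. a k) < \<rho> / 2"
    using \<open>\<epsilon> > 0\<close> \<open>D > 0\<close> by (simp add: field_simps)
  then have "dist (X (Suc j)) (X n) < \<rho> / 2"
    using dist_le_sum_steps[of X D a n "Suc j", OF steps] step.hyps by linarith
  then show ?case
    using sum_le start dist_triangle[of "X (Suc j)" p "X n"] by linarith
qed

lemma limit_point_nonpos:
  fixes X :: "nat \<Rightarrow> 'a::metric_space" and g :: "'a \<Rightarrow> real"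
  assumes a_nonneg: "\<And>k. 0 \<le> a k" and a_div: "\<not> summable a"
    and steps: "\<And>k. dist (X (Suc k)) (X k) \<le> D * a k"
    and conv: "convergent (\<lambda>n. \<Sum>k<n. g (X k) * a k)"
    and p: "p \<in> limit_set X" and cont: "isCont g p"
  shows "g p \<le> 0"
proof (rule ccontr)
  assume "\<not> g p \<le> 0"
  define \<epsilon> where "\<epsilon> = g p / 2"
  have \<epsilon>: "\<epsilon> > 0"
    using \<open>\<not> g p \<le> 0\<close> unfolding \<epsilon>_def by simp
  obtain \<rho> where \<rho>: "\<rho> > 0" "\<forall>y. dist y p < \<rho> \<longrightarrow> \<bar>g y - g p\<bar> < \<epsilon>"
    using cont \<epsilon> unfolding continuous_at_eps_delta dist_real_def by blast
  have g_near: "g y > \<epsilon>" if "dist y p < \<rho>" for y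
    using \<rho>(2) that unfolding \<epsilon>_def abs_less_iff by force
  define D' where "D' = \<bar>D\<bar> + 1"
  have D': "D' > 0" "\<And>k. dist (X (Suc k)) (X k) \<le> D' * a k"
    unfolding D'_def using steps a_nonneg
    by (auto intro: order_trans[OF _ mult_right_mono[of D "\<bar>D\<bar> + 1"]])
  define \<eta> where "\<eta> = \<epsilon> * \<rho> / (2 * D')"
  obtain M where M: "\<And>m n. m \<ge> M \<Longrightarrow> n \<ge> M \<Longrightarrow>
      dist (\<Sum>k<m. g (X k) * a k) (\<Sum>k<n. g (X k) * a k) < \<eta>"
    using conv[THEN convergent_Cauchy, unfolded Cauchy_def, rule_format, of \<eta>]
      \<epsilon> \<rho>(1) D'(1) unfolding \<eta>_def by auto
  obtain n where n: "n \<ge> M" "dist (X n) p < \<rho>/2"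
    using limit_set_imp_frequently_near[OF p, of "\<rho>/2"] \<rho>(1) unfolding frequently_sequentially by auto
  have small: "(\<Sum>k\<in>{n..<j}. g (X k) * a k) < \<eta>" if "n \<le> j" for j
  proof -
    have "(\<Sum>k\<in>{n..<j}. g (X k) * a k) = (\<Sum>k<j. g (X k) * a k) - (\<Sum>k<n. g (X k) * a k)"
      using sum_diff_nat_ivl[of 0 n j "\<lambda>k. g (X k) * a k"] that by (simp add: atLeast0LessThan)
    then show ?thesis
      using M[of j n] n(1) that unfolding dist_real_def by linarith
  qed
  obtain j where "j \<ge> n" "\<eta> / \<epsilon> < (\<Sum>k\<in>{n..<j}. a k)"
    using not_summable_partial_sums_unbounded[OF a_nonneg a_div] by blast
  then show False
    using trapped_near_point[OF a_nonneg D'(1) D'(2) g_near \<epsilon> n(2) small[unfolded \<eta>_def], of j]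
      small[of j] \<epsilon> by (simp add: field_simps)
qed

lemma sum_card_fibres:
  fixes E :: "('v::finite) set set" and f :: "'v set \<Rightarrow> 'v"
  shows "(\<Sum>i\<in>I. card {J\<in>E. f J = i}) = card {J\<in>E. f J \<in> I}"
proof -
  have "card {J\<in>E. f J \<in> I} = card (\<Union>i\<in>I. {J\<in>E. f J = i})"
    by (rule arg_cong[where f = card]) auto
  also have "\<dots> = (\<Sum>i\<in>I. card {J\<in>E. f J = i})"
    by (rule card_UN_disjoint) auto
  finally show ?thesis ..
qed

lemma sum_card_fibres_weighted:
  fixes E :: "('v::finite) set set" and f :: "'v set \<Rightarrow> 'v" and g :: "'v \<Rightarrow> real"
  shows "(\<Sum>i\<in>UNIV. real (card {J\<in>E. f J = i}) * g i) = (\<Sum>J\<in>E. g (f J))"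
proof -
  have card_eq: "real (card {J\<in>E. f J = i}) = (\<Sum>J\<in>E. if i = f J then 1 else 0)" for i
    by (simp add: sum.If_cases Int_def eq_commute)
  have "(\<Sum>i\<in>UNIV. real (card {J\<in>E. f J = i}) * g i) = (\<Sum>i\<in>UNIV. \<Sum>J\<in>E. if i = f J then g i else 0)"
    unfolding card_eq sum_distrib_right by (intro sum.cong refl) auto
  also have "\<dots> = (\<Sum>J\<in>E. \<Sum>i\<in>UNIV. if i = f J then g i else 0)"
    by (rule sum.swap)
  finally show ?thesis by simp
qed

lemma sum_hyperedges_swap:
  fixes E :: "('v::finite) set set"
  shows "(\<Sum>i\<in>UNIV. \<Sum>I\<in>{I\<in>E. i\<in>I}. f i I) = (\<Sum>I\<in>E. \<Sum>i\<in>I. f i I)"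
proof -
  have "(\<Sum>i\<in>UNIV. \<Sum>I\<in>{I\<in>E. i\<in>I}. f i I) = (\<Sum>i\<in>UNIV. \<Sum>I\<in>E. if i \<in> I then f i I else 0)"
    by (simp add: sum.inter_filter)
  also have "\<dots> = (\<Sum>I\<in>E. \<Sum>i\<in>UNIV. if i \<in> I then f i I else 0)"
    by (rule sum.swap)
  also have "\<dots> = (\<Sum>I\<in>E. \<Sum>i\<in>I. f i I)"
    by (simp add: sum.If_cases)
  finally show ?thesis .
qed

lemma ln_diff_ge:
  fixes a b :: real
  assumes "a > 0" "b > 0"
  shows "ln b - ln a \<ge> (b - a)/a - (b - a)^2/(a*b)"
proof -
  have "ln (a/b) \<le> a/b - 1"
    using assms by (intro ln_le_minus_one) auto
  moreover have "(b - a)/a - (b - a)^2/(a*b) = 1 - a/b"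
    using assms by (simp add: field_simps power2_eq_square)
  ultimately show ?thesis
    using assms by (simp add: ln_div)
qed

lemma sum_inverse_squares_le: "(\<Sum>k<n. 1 / (real k + 1)^2) \<le> 2 - 2 / (real n + 1)"
proof (induction n)
  case (Suc n)
  define x where "x = real n"
  have x: "x \<ge> 0" unfolding x_def by simp
  have "2 / (x + 1) - 2 / (x + 2) = 2 / ((x + 1) * (x + 2))"
    using x by (simp add: diff_frac_eq)
  moreover have "(x + 1) * (x + 2) \<le> 2 * (x + 1)^2"
    using x by (simp add: power2_eq_square algebra_simps)
  then have "2 / (2 * (x + 1)^2) \<le> 2 / ((x + 1) * (x + 2))"
    using x by (intro frac_le) auto
  ultimately have "1 / (real n + 1)^2 \<le> 2 / (real n + 1) - 2 / (real n + 2)"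
    unfolding x_def by simp
  then show ?case
    using Suc by (simp add: add.commute)
qed simp

lemma sum_PiE_prod_marginal:
  fixes q :: "'a \<Rightarrow> 'v::finite \<Rightarrow> real"
  assumes "finite A" "J \<in> A" "\<forall>I\<in>A. (\<Sum>i\<in>UNIV. q I i) = 1"
  shows "(\<Sum>c\<in>PiE A (\<lambda>_. UNIV). (\<Prod>I\<in>A. q I (c I)) * f (c J)) = (\<Sum>i\<in>UNIV. q J i * f i)"
proof -
  define g where "g I i = q I i * (if I = J then f i else 1)" for I i
  have "(\<Prod>I\<in>A. g I (c I)) = (\<Prod>I\<in>A. q I (c I)) * f (c J)" for c
    unfolding g_def prod.distrib using assms(1,2) by (simp add: prod.delta)
  moreover have "(\<Prod>I\<in>A. \<Sum>i\<in>UNIV. g I i) = (\<Sum>i\<in>UNIV. q J i * f i)"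
  proof -
    have "(\<Prod>I\<in>A. \<Sum>i\<in>UNIV. g I i) = (\<Prod>I\<in>A. if I = J then (\<Sum>i\<in>UNIV. q J i * f i) else 1)"
      unfolding g_def using assms(3) by (intro prod.cong refl) auto
    then show ?thesis
      using assms(1,2) by (simp add: prod.delta)
  qed
  moreover have "(\<Prod>I\<in>A. \<Sum>i\<in>UNIV. g I i) = (\<Sum>c\<in>PiE A (\<lambda>_. UNIV). \<Prod>I\<in>A. g I (c I))"
    using assms(1) by (rule prod_sum_PiE) simp
  ultimately show ?thesis by simp
qed

lemma sum_PiE_prod_eq_1:
  fixes q :: "'a \<Rightarrow> 'v::finite \<Rightarrow> real"
  assumes "finite A" "\<forall>I\<in>A. (\<Sum>i\<in>UNIV. q I i) = 1"
  shows "(\<Sum>c\<in>PiE A (\<lambda>_. UNIV). (\<Prod>I\<in>A. q I (c I))) = 1"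
proof -
  have "(\<Prod>I\<in>A. \<Sum>i\<in>UNIV. q I i) = (\<Sum>c\<in>PiE A (\<lambda>_. UNIV). \<Prod>I\<in>A. q I (c I))"
    using assms(1) by (rule prod_sum_PiE) simp
  then show ?thesis
    using assms(2) by simp
qed

section \<open>The urn along a fixed history\<close>

locale polya_urn =
  fixes B0 :: "'v::finite \<Rightarrow> nat" and E :: "'v set set"
  assumes edges_nonempty: "E \<noteq> {}"
    and hyperedges_nonempty: "\<forall>I\<in>E. I \<noteq> {}"
    and initial_pos: "\<forall>i. B0 i \<ge> 1"
begin

abbreviation balls where "balls \<equiv> urn_count B0 E"
abbreviation X where "X \<equiv> urn_x B0 E"

definition NE :: real where "NE = real (card E)"
definition N0 :: real where "N0 = real (\<Sum>j\<in>UNIV. B0 j)"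
definition total :: "nat \<Rightarrow> real" where "total n = N0 + real n * NE"

definition admissible :: "(nat \<Rightarrow> 'v set \<Rightarrow> 'v) \<Rightarrow> nat \<Rightarrow> bool" where
  "admissible h n \<longleftrightarrow> (\<forall>k\<in>{1..n}. \<forall>I\<in>E. h k I \<in> I)"

definition mass_lb :: real where "mass_lb = 1 / (N0 + NE)"

lemma NE_ge_1: "NE \<ge> 1"
  using edges_nonempty unfolding NE_def by (simp add: Suc_leI card_gt_0_iff)

lemma N0_ge_1: "N0 \<ge> 1"
proof -
  have "card (UNIV :: 'v set) \<le> (\<Sum>j\<in>UNIV. B0 j)"
    using sum_mono[of UNIV "\<lambda>_. 1" B0] initial_pos by simp
  moreover have "card (UNIV :: 'v set) \<ge> 1"
    by (simp add: Suc_le_eq finite_UNIV_card_ge_0)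
  ultimately show ?thesis
    unfolding N0_def by linarith
qed

lemma total_pos: "total n > 0"
  unfolding total_def using N0_ge_1 NE_ge_1 by (simp add: add_pos_nonneg)

lemma total_Suc: "total (Suc n) = total n + NE"
  unfolding total_def by (simp add: algebra_simps)

lemma total_Suc_ge: "total (Suc n) \<ge> real (Suc n)"
proof -
  have "real (Suc n) * NE \<ge> real (Suc n)"
    using NE_ge_1 by simp
  then show ?thesis
    unfolding total_def using N0_ge_1 by linarith
qed

lemma mass_lb_pos: "mass_lb > 0" and mass_lb_le_1: "mass_lb \<le> 1"
  unfolding mass_lb_def using N0_ge_1 NE_ge_1 by auto

lemma sum_new_balls:
  fixes h :: "nat \<Rightarrow> 'v set \<Rightarrow> 'v"
  shows "(\<Sum>i\<in>I. real (card {J\<in>E. h (Suc n) J = i})) = real (card {J\<in>E. h (Suc n) J \<in> I})"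
  unfolding of_nat_sum[symmetric] sum_card_fibres ..

lemma sum_balls: "(\<Sum>i\<in>UNIV. real (balls h n i)) = total n"
proof (induction n)
  case 0 then show ?case unfolding total_def N0_def by simp
next
  case (Suc n)
  have "(\<Sum>i\<in>UNIV. real (card {I\<in>E. h (Suc n) I = i})) = NE"
    unfolding NE_def sum_new_balls by simp
  then show ?case using Suc by (simp add: sum.distrib total_Suc)
qed

lemma balls_cong:
  assumes "\<forall>k\<in>{1..n}. \<forall>I\<in>E. h k I = h' k I"
  shows "balls h n = balls h' n"
  using assms
proof (induction n)
  case (Suc n)
  have "{I\<in>E. h (Suc n) I = i} = {I\<in>E. h' (Suc n) I = i}" for i
    using Suc.prems by auto
  with Suc show ?case by (simp add: fun_eq_iff)
qed (simp add: fun_eq_iff)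

lemma admissible_mono: "admissible h n \<Longrightarrow> m \<le> n \<Longrightarrow> admissible h m"
  unfolding admissible_def by auto

text \<open>Each hyperedge starts with a ball and receives at least one ball per step.\<close>
lemma edge_balls_ge:
  assumes "admissible h n" "I \<in> E"
  shows "(\<Sum>i\<in>I. real (balls h n i)) \<ge> real n + 1"
  using assms
proof (induction n)
  case 0
  obtain i where "i \<in> I" using hyperedges_nonempty 0 by auto
  then have "real (B0 i) \<le> (\<Sum>i\<in>I. real (B0 i))"
    by (intro member_le_sum) auto
  then show ?case
    using initial_pos[rule_format, of i] by simp
next
  case (Suc n)
  have "I \<in> {J\<in>E. h (Suc n) J \<in> I}"
    using Suc.prems unfolding admissible_def by auto
  then have "1 \<le> card {J\<in>E. h (Suc n) J \<in> I}"
    by (metis (no_types, lifting) One_nat_def Suc_leI card_gt_0_iff empty_iff finite)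
  then have "(\<Sum>i\<in>I. real (card {J\<in>E. h (Suc n) J = i})) \<ge> 1"
    unfolding sum_new_balls by simp
  moreover have "(\<Sum>i\<in>I. real (balls h n i)) \<ge> real n + 1"
    using Suc admissible_mono by auto
  ultimately show ?case
    by (simp add: sum.distrib)
qed

lemma step_edge_balls_le:
  fixes h :: "nat \<Rightarrow> 'v set \<Rightarrow> 'v"
  shows "(\<Sum>i\<in>I. real (card {J\<in>E. h (Suc n) J = i})) \<le> NE"
proof -
  have "card {J\<in>E. h (Suc n) J \<in> I} \<le> card E"
    by (rule card_mono) auto
  then show ?thesis
    unfolding NE_def sum_new_balls by simp
qed

lemma X_nth: "X h n $ i = real (balls h n i) / total n"
  unfolding urn_x_def total_def N0_def NE_def by simp

lemma vsum_X: "vsum (X h n) I = (\<Sum>i\<in>I. real (balls h n i)) / total n"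
  unfolding vsum_def X_nth by (simp add: sum_divide_distrib)

lemma X_nonneg: "X h n $ i \<ge> 0"
  unfolding X_nth using total_pos[of n] by simp

lemma sum_X: "(\<Sum>i\<in>UNIV. X h n $ i) = 1"
  unfolding X_nth using sum_balls[of h n] total_pos[of n] by (simp add: sum_divide_distrib[symmetric])

lemma X_le_1: "X h n $ i \<le> 1"
  using member_le_sum[of i UNIV "\<lambda>j. X h n $ j"] X_nonneg sum_X by simp

lemma vsum_X_le_1: "vsum (X h n) I \<le> 1"
  using sum_mono2[of UNIV I "\<lambda>j. X h n $ j"] X_nonneg sum_X unfolding vsum_def by simp

lemma vsum_X_ge_mass_lb:
  assumes "admissible h n" "I \<in> E"
  shows "vsum (X h n) I \<ge> mass_lb"
proof -
  have "total n \<le> (real n + 1) * (N0 + NE)"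
    unfolding total_def using N0_ge_1 NE_ge_1 by (simp add: algebra_simps)
  then have "mass_lb \<le> (real n + 1) / total n"
    unfolding mass_lb_def using total_pos[of n] N0_ge_1 NE_ge_1 by (simp add: field_simps)
  also have "\<dots> \<le> vsum (X h n) I"
    unfolding vsum_X using edge_balls_ge[OF assms] total_pos[of n] by (simp add: divide_right_mono)
  finally show ?thesis .
qed

lemma vsum_X_pos: "admissible h n \<Longrightarrow> I \<in> E \<Longrightarrow> vsum (X h n) I > 0"
  using vsum_X_ge_mass_lb mass_lb_pos by fastforce

lemma X_step:
  "X h (Suc n) $ i - X h n $ i = (real (card {J\<in>E. h (Suc n) J = i}) - NE * X h n $ i) / total (Suc n)"
  unfolding X_nth using total_pos[of n] total_pos[of "Suc n"] total_Suc[of n]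
  by (simp add: field_simps)

text \<open>Chosen so that \<open>urnF E v $ i = v $ i * (inv_mass v i / NE - 1)\<close>.\<close>
definition inv_mass :: "real ^ 'v \<Rightarrow> 'v \<Rightarrow> real" where
  "inv_mass v i = (\<Sum>I\<in>{I\<in>E. i\<in>I}. 1 / vsum v I)"

text \<open>The Lyapunov function of the mean-field ODE, and its rate of increase along the ODE.\<close>
definition lyap :: "real ^ 'v \<Rightarrow> real" where
  "lyap v = (\<Sum>I\<in>E. ln (vsum v I))"

definition drift :: "real ^ 'v \<Rightarrow> real" where
  "drift v = (\<Sum>i\<in>UNIV. v $ i * (inv_mass v i)^2) - NE^2"

text \<open>The martingale increment when the choice map at step \<open>n + 1\<close> is \<open>c\<close>.\<close>
definition noise :: "(nat \<Rightarrow> 'v set \<Rightarrow> 'v) \<Rightarrow> nat \<Rightarrow> ('v set \<Rightarrow> 'v) \<Rightarrow> real" where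
  "noise h n c = (\<Sum>J\<in>E. inv_mass (X h n) (c J)) - (\<Sum>i\<in>UNIV. X h n $ i * (inv_mass (X h n) i)^2)"

lemma sum_mul_inv_mass:
  assumes "\<forall>I\<in>E. vsum v I \<noteq> 0"
  shows "(\<Sum>i\<in>UNIV. v $ i * inv_mass v i) = NE"
proof -
  have "(\<Sum>i\<in>UNIV. v $ i * inv_mass v i) = (\<Sum>I\<in>E. \<Sum>i\<in>I. v $ i / vsum v I)"
    unfolding inv_mass_def sum_distrib_left sum_hyperedges_swap[symmetric] by simp
  also have "\<dots> = (\<Sum>I\<in>E. 1)"
    using assms by (intro sum.cong refl) (simp add: sum_divide_distrib[symmetric] vsum_def)
  finally show ?thesis unfolding NE_def by simp
qed

lemma drift_eq_variance:
  assumes "\<forall>I\<in>E. vsum v I \<noteq> 0" "(\<Sum>i\<in>UNIV. v $ i) = 1"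
  shows "drift v = (\<Sum>i\<in>UNIV. v $ i * (inv_mass v i - NE)^2)"
proof -
  have "v $ i * (inv_mass v i - NE)^2
      = v $ i * (inv_mass v i)^2 - 2 * NE * (v $ i * inv_mass v i) + NE^2 * v $ i" for i
    by (simp add: power2_eq_square algebra_simps)
  then have "(\<Sum>i\<in>UNIV. v $ i * (inv_mass v i - NE)^2)
      = (\<Sum>i\<in>UNIV. v $ i * (inv_mass v i)^2) - 2 * NE * (\<Sum>i\<in>UNIV. v $ i * inv_mass v i)
        + NE^2 * (\<Sum>i\<in>UNIV. v $ i)"
    by (simp add: sum.distrib sum_subtractf sum_distrib_left)
  then show ?thesis
    unfolding drift_def using sum_mul_inv_mass[OF assms(1)] assms(2) by (simp add: power2_eq_square)
qed

lemma drift_nonneg: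
  assumes "\<forall>I\<in>E. vsum v I \<noteq> 0" "(\<Sum>i\<in>UNIV. v $ i) = 1" "\<forall>i. v $ i \<ge> 0"
  shows "drift v \<ge> 0"
  unfolding drift_eq_variance[OF assms(1,2)] using assms(3) by (intro sum_nonneg) auto

lemma drift_X_nonneg: "admissible h n \<Longrightarrow> drift (X h n) \<ge> 0"
  using vsum_X_pos sum_X X_nonneg by (intro drift_nonneg) (auto simp: less_le)

lemma inv_mass_X_nonneg: "admissible h n \<Longrightarrow> inv_mass (X h n) i \<ge> 0"
  unfolding inv_mass_def using vsum_X_pos by (intro sum_nonneg) (auto simp: less_imp_le)

lemma inv_mass_X_le:
  assumes "admissible h n"
  shows "inv_mass (X h n) i \<le> NE / mass_lb"
proof -
  have "inv_mass (X h n) i \<le> (\<Sum>I\<in>{I\<in>E. i\<in>I}. 1 / mass_lb)"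
    unfolding inv_mass_def using vsum_X_ge_mass_lb[OF assms] mass_lb_pos by (intro sum_mono frac_le) auto
  also have "\<dots> \<le> NE / mass_lb"
    unfolding NE_def using mass_lb_pos by (auto intro!: divide_right_mono card_mono)
  finally show ?thesis .
qed

definition noise_bound :: real where "noise_bound = NE^2 / mass_lb^2"

lemma abs_noise_le:
  assumes "admissible h n"
  shows "\<bar>noise h n c\<bar> \<le> noise_bound"
proof -
  let ?v = "X h n"
  have "(\<Sum>J\<in>E. inv_mass ?v (c J)) \<le> (\<Sum>J\<in>E. NE / mass_lb)"
    using inv_mass_X_le[OF assms] by (intro sum_mono) auto
  also have "\<dots> = NE^2 / mass_lb"
    unfolding NE_def by (simp add: power2_eq_square)
  also have "\<dots> \<le> noise_bound"
    unfolding noise_bound_def using mass_lb_pos mass_lb_le_1 NE_ge_1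
    by (intro divide_left_mono) (auto simp: power2_eq_square mult_le_cancel_left1)
  finally have hit: "(\<Sum>J\<in>E. inv_mass ?v (c J)) \<le> noise_bound" .
  have "(\<Sum>i\<in>UNIV. ?v $ i * (inv_mass ?v i)^2) \<le> (\<Sum>i\<in>UNIV. ?v $ i * (NE / mass_lb)^2)"
    using X_nonneg inv_mass_X_nonneg[OF assms] inv_mass_X_le[OF assms]
    by (intro sum_mono mult_left_mono power_mono) auto
  also have "\<dots> = noise_bound"
    unfolding noise_bound_def sum_distrib_right[symmetric] sum_X by (simp add: power_divide)
  finally have mean: "(\<Sum>i\<in>UNIV. ?v $ i * (inv_mass ?v i)^2) \<le> noise_bound" .
  have "(\<Sum>J\<in>E. inv_mass ?v (c J)) \<ge> 0" "(\<Sum>i\<in>UNIV. ?v $ i * (inv_mass ?v i)^2) \<ge> 0"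
    using inv_mass_X_nonneg[OF assms] X_nonneg by (auto intro: sum_nonneg)
  then show ?thesis
    unfolding noise_def using hit mean by linarith
qed

lemma vsum_X_step:
  "vsum (X h (Suc n)) I - vsum (X h n) I
     = (\<Sum>i\<in>I. real (card {J\<in>E. h (Suc n) J = i}) - NE * X h n $ i) / total (Suc n)"
  unfolding vsum_def sum_subtractf[symmetric] X_step sum_divide_distrib ..

lemma lyap_linear_term:
  assumes "admissible h n"
  shows "(\<Sum>I\<in>E. (vsum (X h (Suc n)) I - vsum (X h n) I) / vsum (X h n) I)
           = (drift (X h n) + noise h n (h (Suc n))) / total (Suc n)"
proof -
  let ?v = "X h n" and ?t = "total (Suc n)"
  define d where "d i = real (card {J\<in>E. h (Suc n) J = i})" for i
  have "(\<Sum>I\<in>E. (vsum (X h (Suc n)) I - vsum ?v I) / vsum ?v I)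
      = (\<Sum>I\<in>E. \<Sum>i\<in>I. (d i - NE * ?v $ i) / ?t / vsum ?v I)"
    unfolding vsum_X_step d_def sum_divide_distrib ..
  also have "\<dots> = (\<Sum>i\<in>UNIV. (d i - NE * ?v $ i) / ?t * inv_mass ?v i)"
    unfolding sum_hyperedges_swap[symmetric] inv_mass_def by (simp add: sum_distrib_left)
  also have "\<dots> = (\<Sum>i\<in>UNIV. d i * inv_mass ?v i - NE * (?v $ i * inv_mass ?v i)) / ?t"
    unfolding sum_divide_distrib by (intro sum.cong refl) (simp add: algebra_simps)
  also have "\<dots> = ((\<Sum>i\<in>UNIV. d i * inv_mass ?v i) - NE * (\<Sum>i\<in>UNIV. ?v $ i * inv_mass ?v i)) / ?t"
    by (simp add: sum_subtractf sum_distrib_left)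
  also have "\<dots> = ((\<Sum>J\<in>E. inv_mass ?v (h (Suc n) J)) - NE * NE) / ?t"
    unfolding d_def sum_card_fibres_weighted using sum_mul_inv_mass[of ?v] vsum_X_pos[OF assms] by force
  also have "\<dots> = (drift ?v + noise h n (h (Suc n))) / ?t"
    unfolding drift_def noise_def by (simp add: power2_eq_square)
  finally show ?thesis .
qed

text \<open>Each edge mass moves by at most \<open>NE / total (n + 1)\<close>.\<close>
lemma lyap_quadratic_term_le:
  assumes "admissible h (Suc n)" "I \<in> E"
  shows "(vsum (X h (Suc n)) I - vsum (X h n) I)^2 / (vsum (X h n) I * vsum (X h (Suc n)) I)
           \<le> NE^2 / (mass_lb^2 * (total (Suc n))^2)"
proof -
  let ?v = "vsum (X h n) I" and ?w = "vsum (X h (Suc n)) I" and ?t = "total (Suc n)"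
  define D where "D = (\<Sum>i\<in>I. real (card {J\<in>E. h (Suc n) J = i}))"
  have adm: "admissible h n"
    using admissible_mono[OF assms(1), of n] by simp
  have v: "mass_lb \<le> ?v" "?v \<le> 1" and w: "mass_lb \<le> ?w"
    using vsum_X_ge_mass_lb[OF adm assms(2)] vsum_X_le_1 vsum_X_ge_mass_lb[OF assms] by auto
  have step: "?w - ?v = (D - NE * ?v) / ?t"
    unfolding vsum_X_step D_def by (simp add: sum_subtractf sum_distrib_left[symmetric] vsum_def)
  have "0 \<le> D" "D \<le> NE"
    unfolding D_def using step_edge_balls_le by (auto intro: sum_nonneg)
  moreover have "0 \<le> NE * ?v" "NE * ?v \<le> NE"
    using v mass_lb_pos NE_ge_1 by (simp_all add: mult_left_le)
  ultimately have "\<bar>D - NE * ?v\<bar> \<le> NE"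
    by (simp add: abs_le_iff)
  then have "\<bar>?w - ?v\<bar> \<le> NE / ?t"
    unfolding step using total_pos[of "Suc n"] by (simp add: divide_right_mono)
  then have "(?w - ?v)^2 \<le> (NE / ?t)^2"
    by (metis abs_ge_zero power2_abs power_mono)
  moreover have "mass_lb^2 \<le> ?v * ?w"
    using v w mass_lb_pos by (simp add: power2_eq_square mult_mono)
  ultimately have "(?w - ?v)^2 / (?v * ?w) \<le> (NE / ?t)^2 / mass_lb^2"
    using mass_lb_pos by (intro frac_le) auto
  then show ?thesis
    by (simp add: power_divide field_simps)
qed

lemma lyap_step:
  assumes "admissible h (Suc n)"
  shows "lyap (X h (Suc n)) - lyap (X h n)
           \<ge> (drift (X h n) + noise h n (h (Suc n))) / total (Suc n)
             - NE^3 / (mass_lb^2 * (total (Suc n))^2)"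
proof -
  let ?v = "X h n" and ?w = "X h (Suc n)" and ?t = "total (Suc n)"
  let ?lin = "\<lambda>I. (vsum ?w I - vsum ?v I) / vsum ?v I"
  let ?quad = "\<lambda>I. (vsum ?w I - vsum ?v I)^2 / (vsum ?v I * vsum ?w I)"
  have adm: "admissible h n"
    using admissible_mono[OF assms, of n] by simp
  have pos: "vsum ?v I > 0" "vsum ?w I > 0" if "I \<in> E" for I
    using vsum_X_pos[OF adm that] vsum_X_pos[OF assms that] by auto
  have "lyap ?w - lyap ?v = (\<Sum>I\<in>E. ln (vsum ?w I) - ln (vsum ?v I))"
    unfolding lyap_def by (simp add: sum_subtractf)
  also have "\<dots> \<ge> (\<Sum>I\<in>E. ?lin I - ?quad I)"
    using pos by (intro sum_mono ln_diff_ge) auto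
  finally have "lyap ?w - lyap ?v \<ge> (\<Sum>I\<in>E. ?lin I) - (\<Sum>I\<in>E. ?quad I)"
    by (simp add: sum_subtractf)
  moreover have "(\<Sum>I\<in>E. ?quad I) \<le> (\<Sum>I\<in>E. NE^2 / (mass_lb^2 * ?t^2))"
    using lyap_quadratic_term_le[OF assms] by (rule sum_mono)
  moreover have "(\<Sum>I\<in>E. NE^2 / (mass_lb^2 * ?t^2)) = NE^3 / (mass_lb^2 * ?t^2)"
    by (simp add: NE_def power3_eq_cube power2_eq_square)
  ultimately show ?thesis
    using lyap_linear_term[OF adm] by linarith
qed

definition drift_sum :: "(nat \<Rightarrow> 'v set \<Rightarrow> 'v) \<Rightarrow> nat \<Rightarrow> real" where
  "drift_sum h n = (\<Sum>k<n. drift (X h k) / total (Suc k))"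

definition noise_sum :: "(nat \<Rightarrow> 'v set \<Rightarrow> 'v) \<Rightarrow> nat \<Rightarrow> real" where
  "noise_sum h n = (\<Sum>k<n. noise h k (h (Suc k)) / total (Suc k))"

definition lyap_const :: real where
  "lyap_const = - NE * ln mass_lb + 2 * (NE^3 / mass_lb^2)"

lemma drift_sum_mono: "admissible h n \<Longrightarrow> drift_sum h n \<le> drift_sum h (Suc n)"
  unfolding drift_sum_def using drift_X_nonneg[of h n] total_pos[of "Suc n"] by simp

lemma lyap_X_nonpos: "admissible h n \<Longrightarrow> lyap (X h n) \<le> 0"
  unfolding lyap_def using vsum_X_pos vsum_X_le_1 by (intro sum_nonpos) auto

lemma lyap_X_0_ge: "lyap (X h 0) \<ge> NE * ln mass_lb"
proof -
  have "admissible h 0"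
    unfolding admissible_def by simp
  then have "(\<Sum>I\<in>E. ln mass_lb) \<le> lyap (X h 0)"
    unfolding lyap_def using vsum_X_ge_mass_lb mass_lb_pos by (intro sum_mono) (subst ln_le_cancel_iff; force)
  then show ?thesis
    unfolding NE_def by simp
qed

lemma sum_inverse_total_sq_le: "(\<Sum>k<n. 1 / (total (Suc k))^2) \<le> 2"
proof -
  have "(\<Sum>k<n. 1 / (total (Suc k))^2) \<le> (\<Sum>k<n. 1 / (real k + 1)^2)"
  proof (intro sum_mono)
    fix k
    have "real k + 1 \<le> total (Suc k)"
      using total_Suc_ge[of k] by simp
    then show "1 / (total (Suc k))^2 \<le> 1 / (real k + 1)^2"
      by (intro divide_left_mono power_mono mult_pos_pos) auto
  qed
  also have "\<dots> \<le> 2"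
    using sum_inverse_squares_le[of n] by (smt (verit) divide_nonneg_nonneg of_nat_0_le_iff)
  finally show ?thesis .
qed

text \<open>Summing \<open>lyap_step\<close>: the drift sum is controlled by the noise sum, since \<open>lyap\<close> is
  bounded above by \<open>0\<close> and starts above \<open>NE * ln mass_lb\<close>.\<close>
lemma drift_sum_le:
  assumes "admissible h n"
  shows "drift_sum h n \<le> lyap_const - noise_sum h n"
proof -
  have "(\<Sum>k<n. (drift (X h k) + noise h k (h (Suc k))) / total (Suc k)
                 - NE^3 / (mass_lb^2 * (total (Suc k))^2))
        \<le> (\<Sum>k<n. lyap (X h (Suc k)) - lyap (X h k))"
    using assms by (intro sum_mono lyap_step) (auto intro: admissible_mono)
  also have "\<dots> = lyap (X h n) - lyap (X h 0)"
    by (rule sum_lessThan_telescope)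
  also have "\<dots> \<le> - NE * ln mass_lb"
    using lyap_X_nonpos[OF assms] lyap_X_0_ge[of h] by linarith
  finally have "drift_sum h n + noise_sum h n - (NE^3 / mass_lb^2) * (\<Sum>k<n. 1 / (total (Suc k))^2)
                  \<le> - NE * ln mass_lb"
    unfolding drift_sum_def noise_sum_def
    by (simp add: sum_subtractf sum_distrib_left sum.distrib add_divide_distrib)
  moreover have "(NE^3 / mass_lb^2) * (\<Sum>k<n. 1 / (total (Suc k))^2) \<le> 2 * (NE^3 / mass_lb^2)"
    using mult_left_mono[OF sum_inverse_total_sq_le[of n], of "NE^3 / mass_lb^2"] NE_ge_1
    by (simp add: mult.commute)
  ultimately show ?thesis
    unfolding lyap_const_def by linarith
qed

definition step_bound :: real where "step_bound = real CARD('v) * NE"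

lemma norm_X_le: "norm (X h n) \<le> real CARD('v)"
proof -
  have "norm (X h n) \<le> (\<Sum>i\<in>UNIV. \<bar>X h n $ i\<bar>)"
    by (rule norm_le_l1_cart)
  also have "\<dots> \<le> (\<Sum>i\<in>(UNIV::'v set). 1)"
    using X_le_1 X_nonneg by (intro sum_mono) auto
  finally show ?thesis by simp
qed

lemma bounded_range_X: "bounded (range (X h))"
  unfolding bounded_iff using norm_X_le by blast

lemma dist_X_Suc_le: "dist (X h (Suc n)) (X h n) \<le> step_bound * (1 / total (Suc n))"
proof -
  have "\<bar>X h (Suc n) $ i - X h n $ i\<bar> \<le> NE / total (Suc n)" for i
  proof -
    have "real (card {J\<in>E. h (Suc n) J = i}) \<le> NE"
      unfolding NE_def by (auto intro!: card_mono)
    moreover have "NE * X h n $ i \<le> NE" "NE * X h n $ i \<ge> 0"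
      using X_le_1 X_nonneg NE_ge_1 by (simp_all add: mult_left_le)
    ultimately have "\<bar>real (card {J\<in>E. h (Suc n) J = i}) - NE * X h n $ i\<bar> \<le> NE"
      by (simp add: abs_le_iff)
    then show ?thesis
      unfolding X_step using total_pos[of "Suc n"] by (simp add: divide_right_mono)
  qed
  then have "(\<Sum>i\<in>UNIV. \<bar>(X h (Suc n) - X h n) $ i\<bar>) \<le> (\<Sum>i\<in>(UNIV::'v set). NE / total (Suc n))"
    by (intro sum_mono) simp
  then show ?thesis
    using norm_le_l1_cart[of "X h (Suc n) - X h n"] unfolding step_bound_def dist_norm by simp
qed

lemma X_small_steps: "(\<lambda>n. dist (X h (Suc n)) (X h n)) \<longlonglongrightarrow> 0"
proof (rule tendsto_sandwich[of "\<lambda>_. 0" _ _ "\<lambda>n. step_bound * inverse (real (Suc n))"])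
  have "step_bound * (1 / total (Suc n)) \<le> step_bound * inverse (real (Suc n))" for n
    unfolding step_bound_def using NE_ge_1 total_Suc_ge[of n]
    by (intro mult_left_mono) (auto simp: divide_simps)
  then show "\<forall>\<^sub>F n in sequentially. dist (X h (Suc n)) (X h n) \<le> step_bound * inverse (real (Suc n))"
    using dist_X_Suc_le order_trans by (intro always_eventually allI) blast
  show "(\<lambda>n. step_bound * inverse (real (Suc n))) \<longlonglongrightarrow> 0"
    using tendsto_mult_right_zero[OF LIMSEQ_inverse_real_of_nat] by simp
qed simp_all

lemma not_summable_inverse_total: "\<not> summable (\<lambda>k. 1 / total (Suc k))"
proof
  assume "summable (\<lambda>k. 1 / total (Suc k))"
  then have "summable (\<lambda>k. (N0 + NE) * (1 / total (Suc k)))"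
    by (rule summable_mult)
  moreover have "norm (inverse (real (Suc k))) \<le> (N0 + NE) * (1 / total (Suc k))" for k
  proof -
    have "total (Suc k) \<le> real (Suc k) * (N0 + NE)"
      unfolding total_def using N0_ge_1 NE_ge_1 by (simp add: algebra_simps)
    then show ?thesis
      using total_pos[of "Suc k"] N0_ge_1 NE_ge_1 by (simp add: field_simps)
  qed
  ultimately have "summable (\<lambda>k. inverse (real (Suc k)))"
    by (rule summable_comparison_test'[where N = 0])
  then show False
    using not_summable_harmonic[where 'a = real] summable_Suc_iff[of "\<lambda>n. inverse (real n)"] by simp
qed

text \<open>The choice of \<open>c < 1/NE\<close> makes the a-priori bound \<open>(n+1)/total n\<close> on edge masses
  eventually exceed \<open>c\<close>.\<close>
lemma eventually_c_le_edge_bound: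
  assumes "0 < c" "c < 1 / NE"
  shows "\<forall>\<^sub>F n in sequentially. c \<le> (real n + 1) / total n"
proof -
  have cN: "1 - c * NE > 0"
    using assms NE_ge_1 by (simp add: field_simps)
  obtain n0 :: nat where n0: "real n0 \<ge> c * N0 / (1 - c * NE)"
    using real_arch_simple by blast
  have "c \<le> (real n + 1) / total n" if "n \<ge> n0" for n
  proof -
    have "real n \<ge> c * N0 / (1 - c * NE)"
      using that n0 by linarith
    then have "real n * (1 - c * NE) \<ge> c * N0"
      using cN by (simp add: field_simps)
    then have "c * total n \<le> real n + 1"
      unfolding total_def using assms(1) by (simp add: algebra_simps)
    then show ?thesis
      using total_pos[of n] by (simp add: field_simps)
  qed
  then show ?thesis
    unfolding eventually_sequentially by blast
qed

lemma limit_set_X_subset_Delta: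
  assumes c: "0 < c" "c < 1 / NE" and adm: "\<forall>n. admissible h n"
  shows "limit_set (X h) \<subseteq> Delta E c"
proof
  fix p assume "p \<in> limit_set (X h)"
  then obtain r where r: "strict_mono r" "(X h \<circ> r) \<longlonglongrightarrow> p"
    unfolding limit_set_def by auto
  have coord: "(\<lambda>k. X h (r k) $ i) \<longlonglongrightarrow> p $ i" for i
    using tendsto_vec_nth[OF r(2)] by (simp add: comp_def)
  have "p $ i \<ge> 0" for i
    by (rule LIMSEQ_le_const[OF coord]) (auto simp: X_nonneg)
  moreover have "(\<lambda>k. \<Sum>i\<in>UNIV. X h (r k) $ i) \<longlonglongrightarrow> (\<Sum>i\<in>UNIV. p $ i)"
    by (intro tendsto_sum coord)
  then have "(\<Sum>i\<in>UNIV. p $ i) = 1"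
    using sum_X by (simp add: LIMSEQ_const_iff)
  moreover have "vsum p I \<ge> c" if "I \<in> E" for I
  proof (rule LIMSEQ_le_const)
    show "(\<lambda>k. vsum (X h (r k)) I) \<longlonglongrightarrow> vsum p I"
      unfolding vsum_def by (intro tendsto_sum coord)
    obtain n0 where n0: "\<And>n. n \<ge> n0 \<Longrightarrow> c \<le> (real n + 1) / total n"
      using eventually_c_le_edge_bound[OF c] unfolding eventually_sequentially by blast
    have "c \<le> vsum (X h (r k)) I" if "k \<ge> n0" for k
    proof -
      have "c \<le> (real (r k) + 1) / total (r k)"
        using n0 seq_suble[OF r(1), of k] that by simp
      also have "\<dots> \<le> vsum (X h (r k)) I"
        unfolding vsum_X using edge_balls_ge[OF adm[rule_format] \<open>I \<in> E\<close>, of "r k"] total_pos[of "r k"]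
        by (intro divide_right_mono) auto
      finally show ?thesis .
    qed
    then show "\<exists>N. \<forall>k\<ge>N. c \<le> vsum (X h (r k)) I"
      by blast
  qed
  ultimately show "p \<in> Delta E c"
    unfolding Delta_def by auto
qed

lemma isCont_drift:
  assumes "\<forall>I\<in>E. vsum p I \<noteq> 0"
  shows "isCont drift p"
proof -
  have "isCont (\<lambda>v. vsum v I) p" for I
    unfolding vsum_def by (intro continuous_intros)
  then have "isCont (\<lambda>v. inv_mass v i) p" for i
    unfolding inv_mass_def using assms by (intro continuous_intros) auto
  then show ?thesis
    unfolding drift_def[abs_def] by (intro continuous_intros)
qed

text \<open>\<open>drift\<close> vanishes exactly at the zeros of \<open>urnF\<close>: it is the \<open>v\<close>-weighted variance of
  \<open>inv_mass v\<close>, which has \<open>v\<close>-mean \<open>NE\<close>.\<close>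
lemma urnF_eq_0_if_drift_eq_0:
  assumes p: "p \<in> Delta E c" "0 < c" and "drift p = 0"
  shows "urnF E p = 0"
proof -
  have nonzero: "\<forall>I\<in>E. vsum p I \<noteq> 0" and "(\<Sum>i\<in>UNIV. p $ i) = 1" and nonneg: "\<forall>i. p $ i \<ge> 0"
    using p unfolding Delta_def by force+
  then have "(\<Sum>i\<in>UNIV. p $ i * (inv_mass p i - NE)^2) = 0"
    using drift_eq_variance \<open>drift p = 0\<close> by simp
  then have zero: "p $ i * (inv_mass p i - NE)^2 = 0" for i
    using nonneg by (subst (asm) sum_nonneg_eq_0_iff) auto
  have "urnF E p $ i = 0" for i
  proof -
    have "urnF E p $ i = p $ i * (inv_mass p i / NE - 1)"
      unfolding urnF_def inv_mass_def NE_def by (simp add: sum_distrib_left sum_divide_distrib algebra_simps)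
    also have "\<dots> = 0"
      using zero[of i] NE_ge_1 by auto
    finally show ?thesis .
  qed
  then show ?thesis
    by (simp add: vec_eq_iff)
qed

lemma limit_set_X_subset_Lambda:
  assumes c: "0 < c" "c < 1 / NE" and adm: "\<forall>n. admissible h n"
    and bounded: "\<forall>n. drift_sum h n \<le> B"
  shows "limit_set (X h) \<subseteq> Lambda E c"
proof
  fix p assume p: "p \<in> limit_set (X h)"
  then have pD: "p \<in> Delta E c"
    using limit_set_X_subset_Delta[OF c adm] by blast
  then have nonzero: "\<forall>I\<in>E. vsum p I \<noteq> 0"
    using c unfolding Delta_def by force
  have "incseq (drift_sum h)"
    using drift_sum_mono adm by (intro incseq_SucI) auto
  then have "convergent (drift_sum h)"
    using bounded by (auto intro: incseq_convergent convergentI)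
  then have "convergent (\<lambda>n. \<Sum>k<n. drift (X h k) * (1 / total (Suc k)))"
    by (simp add: drift_sum_def[abs_def])
  then have "drift p \<le> 0"
    using limit_point_nonpos[OF _ not_summable_inverse_total dist_X_Suc_le _ p isCont_drift[OF nonzero]]
      total_pos by (simp add: less_imp_le)
  moreover have "drift p \<ge> 0"
    using pD nonzero unfolding Delta_def by (intro drift_nonneg) auto
  ultimately have "urnF E p = 0"
    using urnF_eq_0_if_drift_eq_0[OF pD c(1)] by simp
  then show "p \<in> Lambda E c"
    using pD unfolding Lambda_def by simp
qed


text \<open>Histories up to step \<open>n\<close>, normalised to \<open>undefined\<close> outside the steps and hyperedges that
  matter, so that there are finitely many of them.\<close>
definition histories :: "nat \<Rightarrow> (nat \<Rightarrow> 'v set \<Rightarrow> 'v) set" where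
  "histories n = {h. \<forall>k I. \<not> (k \<in> {1..n} \<and> I \<in> E) \<longrightarrow> h k I = undefined}"

definition restrict_history :: "nat \<Rightarrow> (nat \<Rightarrow> 'v set \<Rightarrow> 'v) \<Rightarrow> (nat \<Rightarrow> 'v set \<Rightarrow> 'v)" where
  "restrict_history n h = (\<lambda>k I. if k \<in> {1..n} \<and> I \<in> E then h k I else undefined)"

abbreviation choices :: "('v set \<Rightarrow> 'v) set" where
  "choices \<equiv> PiE E (\<lambda>_. UNIV)"

lemma restrict_history_in: "restrict_history n h \<in> histories n"
  unfolding restrict_history_def histories_def by auto

lemma restrict_history_agrees: "\<forall>k\<in>{1..n}. \<forall>I\<in>E. h k I = restrict_history n h k I"
  unfolding restrict_history_def by auto

lemma restrict_history_eq_iff: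
  "g \<in> histories n \<Longrightarrow> restrict_history n h = g \<longleftrightarrow> (\<forall>k\<in>{1..n}. \<forall>I\<in>E. h k I = g k I)"
  unfolding restrict_history_def histories_def by (auto simp: fun_eq_iff)

lemma histories_0: "histories 0 = {\<lambda>_ _. undefined}"
  unfolding histories_def by (auto simp: fun_eq_iff)

lemma bij_betw_histories_Suc:
  "bij_betw (\<lambda>(h, c). h(Suc n := c)) (histories n \<times> choices) (histories (Suc n))"
proof (rule bij_betw_byWitness[where f' = "\<lambda>g. (g(Suc n := (\<lambda>_. undefined)), g (Suc n))"])
  show "\<forall>x\<in>histories n \<times> choices. (\<lambda>g. (g(Suc n := (\<lambda>_. undefined)), g (Suc n))) ((\<lambda>(h, c). h(Suc n := c)) x) = x"
    unfolding histories_def by (auto simp: fun_eq_iff)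
  show "(\<lambda>(h, c). h(Suc n := c)) ` (histories n \<times> choices) \<subseteq> histories (Suc n)"
    unfolding histories_def PiE_def extensional_def by auto
  show "(\<lambda>g. (g(Suc n := (\<lambda>_. undefined)), g (Suc n))) ` histories (Suc n) \<subseteq> histories n \<times> choices"
    unfolding histories_def PiE_def extensional_def by auto
qed (auto simp: fun_eq_iff)

lemma finite_histories: "finite (histories n)"
proof (induction n)
  case (Suc n)
  then show ?case
    using bij_betw_finite[OF bij_betw_histories_Suc[of n]] by (simp add: finite_PiE)
qed (simp add: histories_0)

lemma sum_histories_Suc:
  "(\<Sum>g\<in>histories (Suc n). f g) = (\<Sum>h\<in>histories n. \<Sum>c\<in>choices. f (h(Suc n := c)))"
  using sum.reindex_bij_betw[OF bij_betw_histories_Suc[of n], of f]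
  by (simp add: sum.cartesian_product case_prod_unfold)


abbreviation path_prob where "path_prob \<equiv> urn_path_prob B0 E"

text \<open>Conditional probability that hyperedge \<open>I\<close> sends its ball to \<open>i\<close> at step \<open>n + 1\<close>.\<close>
definition choice_prob :: "(nat \<Rightarrow> 'v set \<Rightarrow> 'v) \<Rightarrow> nat \<Rightarrow> 'v set \<Rightarrow> 'v \<Rightarrow> real" where
  "choice_prob h n I i = (if i \<in> I then real (balls h n i) / real (\<Sum>j\<in>I. balls h n j) else 0)"

lemma path_prob_cong:
  assumes "\<forall>k\<in>{1..n}. \<forall>I\<in>E. h k I = h' k I"
  shows "path_prob h n = path_prob h' n"
  unfolding urn_path_prob_def
proof (intro prod.cong refl)
  fix k I assume k: "k \<in> {1..n}" and I: "I \<in> E"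
  have "balls h (k - 1) = balls h' (k - 1)"
    using assms k by (intro balls_cong) auto
  moreover have "h k I = h' k I"
    using assms k I by blast
  ultimately show "(if h k I \<in> I then real (balls h (k - 1) (h k I)) / real (\<Sum>j\<in>I. balls h (k - 1) j) else 0) =
      (if h' k I \<in> I then real (balls h' (k - 1) (h' k I)) / real (\<Sum>j\<in>I. balls h' (k - 1) j) else 0)"
    by simp
qed

lemma path_prob_Suc: "path_prob (h(Suc n := c)) (Suc n) = path_prob h n * (\<Prod>I\<in>E. choice_prob h n I (c I))"
proof -
  let ?h' = "h(Suc n := c)"
  define F where "F k = (\<Prod>I\<in>E. if ?h' k I \<in> I
      then real (balls ?h' (k - 1) (?h' k I)) / real (\<Sum>j\<in>I. balls ?h' (k - 1) j) else 0)" for k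
  have "path_prob ?h' (Suc n) = F (Suc n) * prod F {1..n}"
    unfolding urn_path_prob_def F_def[symmetric] by (simp add: atLeastAtMostSuc_conv)
  moreover have "prod F {1..n} = path_prob h n"
    unfolding F_def urn_path_prob_def[symmetric] by (intro path_prob_cong) auto
  moreover have "balls ?h' n = balls h n"
    by (intro balls_cong) auto
  then have "F (Suc n) = (\<Prod>I\<in>E. choice_prob h n I (c I))"
    unfolding F_def choice_prob_def by (simp cong: if_cong)
  ultimately show ?thesis
    by (simp only: mult.commute)
qed

lemma choice_prob_nonneg: "choice_prob h n I i \<ge> 0"
  unfolding choice_prob_def by (simp del: of_nat_sum)

lemma path_prob_nonneg: "path_prob h n \<ge> 0"
  unfolding urn_path_prob_def by (intro prod_nonneg) (simp del: of_nat_sum)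

lemma admissible_if_path_prob_nonzero:
  assumes "path_prob h n \<noteq> 0"
  shows "admissible h n"
  unfolding admissible_def
proof (intro ballI)
  fix k I assume k: "k \<in> {1..n}" and I: "I \<in> E"
  define G where "G k' I' = (if h k' I' \<in> I'
      then real (balls h (k' - 1) (h k' I')) / real (\<Sum>j\<in>I'. balls h (k' - 1) j) else 0)" for k' I'
  show "h k I \<in> I"
  proof (rule ccontr)
    assume "h k I \<notin> I"
    then have "(\<Prod>I'\<in>E. G k I') = 0"
      using I unfolding G_def by (intro prod_zero) auto
    then have "path_prob h n = 0"
      unfolding urn_path_prob_def G_def[symmetric] using k by (intro prod_zero) auto
    with assms show False ..
  qed
qed

lemma sum_choice_prob:
  assumes "admissible h n" "I \<in> E"
  shows "(\<Sum>i\<in>UNIV. choice_prob h n I i) = 1"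
proof -
  have "real (\<Sum>j\<in>I. balls h n j) > 0"
    using edge_balls_ge[OF assms] by (simp add: of_nat_sum)
  then show ?thesis
    unfolding choice_prob_def by (simp add: sum.If_cases sum_divide_distrib[symmetric] of_nat_sum)
qed

lemma choice_prob_eq:
  assumes "admissible h n" "I \<in> E" "i \<in> I"
  shows "choice_prob h n I i = X h n $ i / vsum (X h n) I"
  using assms total_pos[of n] unfolding choice_prob_def X_nth vsum_X by (simp add: of_nat_sum)

lemma sum_path_prob: "(\<Sum>h\<in>histories n. path_prob h n) = 1"
proof (induction n)
  case 0 then show ?case by (simp add: histories_0 urn_path_prob_def)
next
  case (Suc n)
  have "(\<Sum>c\<in>choices. path_prob h n * (\<Prod>I\<in>E. choice_prob h n I (c I))) = path_prob h n" for h
  proof (cases "path_prob h n = 0")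
    case False
    then have "admissible h n"
      by (rule admissible_if_path_prob_nonzero)
    then have "(\<Sum>c\<in>choices. (\<Prod>I\<in>E. choice_prob h n I (c I))) = 1"
      using sum_choice_prob by (intro sum_PiE_prod_eq_1) auto
    then show ?thesis
      by (simp add: sum_distrib_left[symmetric])
  qed simp
  then show ?case
    unfolding sum_histories_Suc path_prob_Suc using Suc by simp
qed

lemma noise_mean_zero:
  assumes adm: "admissible h n"
  shows "(\<Sum>c\<in>choices. (\<Prod>I\<in>E. choice_prob h n I (c I)) * noise h n c) = 0"
proof -
  let ?v = "X h n" and ?P = "\<lambda>c. \<Prod>I\<in>E. choice_prob h n I (c I)"
  let ?mean = "\<Sum>i\<in>UNIV. ?v $ i * (inv_mass ?v i)^2"
  have q1: "\<forall>I\<in>E. (\<Sum>i\<in>UNIV. choice_prob h n I i) = 1"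
    using sum_choice_prob[OF adm] by auto
  have "(\<Sum>c\<in>choices. ?P c * noise h n c)
        = (\<Sum>c\<in>choices. (\<Sum>J\<in>E. ?P c * inv_mass ?v (c J)) - ?P c * ?mean)"
    unfolding noise_def by (simp only: right_diff_distrib sum_distrib_left)
  also have "\<dots> = (\<Sum>J\<in>E. \<Sum>c\<in>choices. ?P c * inv_mass ?v (c J)) - (\<Sum>c\<in>choices. ?P c) * ?mean"
    by (simp only: sum_subtractf sum_distrib_right sum.swap[of _ choices])
  also have "(\<Sum>c\<in>choices. ?P c) = 1"
    using q1 by (intro sum_PiE_prod_eq_1) auto
  also have "(\<Sum>J\<in>E. \<Sum>c\<in>choices. ?P c * inv_mass ?v (c J))
             = (\<Sum>J\<in>E. \<Sum>i\<in>UNIV. choice_prob h n J i * inv_mass ?v i)"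
    using q1 by (intro sum.cong refl sum_PiE_prod_marginal) auto
  also have "\<dots> = (\<Sum>J\<in>E. \<Sum>i\<in>J. ?v $ i * inv_mass ?v i / vsum ?v J)"
  proof (rule sum.cong[OF refl])
    fix J assume J: "J \<in> E"
    have "(\<Sum>i\<in>UNIV. choice_prob h n J i * inv_mass ?v i) = (\<Sum>i\<in>J. choice_prob h n J i * inv_mass ?v i)"
      by (rule sum.mono_neutral_right) (auto simp: choice_prob_def)
    also have "\<dots> = (\<Sum>i\<in>J. ?v $ i * inv_mass ?v i / vsum ?v J)"
      using choice_prob_eq[OF adm J] by (intro sum.cong refl) auto
    finally show "(\<Sum>i\<in>UNIV. choice_prob h n J i * inv_mass ?v i) = (\<Sum>i\<in>J. ?v $ i * inv_mass ?v i / vsum ?v J)" .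
  qed
  also have "\<dots> = ?mean"
    unfolding sum_hyperedges_swap[symmetric] inv_mass_def
    by (intro sum.cong refl) (simp add: sum_distrib_left power2_eq_square)
  finally show ?thesis by simp
qed


lemma X_cong: "\<forall>k\<in>{1..n}. \<forall>I\<in>E. h k I = h' k I \<Longrightarrow> X h n = X h' n"
  unfolding urn_x_def using balls_cong by metis

lemma drift_sum_cong:
  assumes "\<forall>k\<in>{1..n}. \<forall>I\<in>E. h k I = h' k I"
  shows "drift_sum h n = drift_sum h' n"
  unfolding drift_sum_def using assms by (intro sum.cong refl) (subst X_cong[of _ h h']; auto)

lemma noise_sum_cong:
  assumes "\<forall>k\<in>{1..n}. \<forall>I\<in>E. h k I = h' k I"
  shows "noise_sum h n = noise_sum h' n"
proof -
  have "noise h k (h (Suc k)) = noise h' k (h' (Suc k))" if "k < n" for k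
  proof -
    have "X h k = X h' k"
      using assms that by (intro X_cong) auto
    moreover have "\<forall>J\<in>E. h (Suc k) J = h' (Suc k) J"
      using assms that by auto
    ultimately show ?thesis
      unfolding noise_def by simp
  qed
  then show ?thesis
    unfolding noise_sum_def by simp
qed

lemma admissible_cong:
  "\<forall>k\<in>{1..n}. \<forall>I\<in>E. h k I = h' k I \<Longrightarrow> admissible h n = admissible h' n"
  unfolding admissible_def by auto

lemma noise_sum_Suc_update:
  "noise_sum (h(Suc n := c)) (Suc n) = noise_sum h n + noise h n c / total (Suc n)"
proof -
  have "noise_sum (h(Suc n := c)) n = noise_sum h n"
    by (rule noise_sum_cong) auto
  moreover have "X (h(Suc n := c)) n = X h n"
    by (rule X_cong) auto
  ultimately show ?thesis
    unfolding noise_sum_def noise_def by simp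
qed

definition noise_sum_moment2 :: "nat \<Rightarrow> real" where
  "noise_sum_moment2 n = (\<Sum>h\<in>histories n. path_prob h n * (noise_sum h n)^2)"

text \<open>Since the new summand has conditional mean zero, only its square adds to the second
  moment.\<close>
lemma conditional_moment2_le:
  assumes adm: "admissible h n"
  shows "(\<Sum>c\<in>choices. (\<Prod>I\<in>E. choice_prob h n I (c I)) * (noise_sum h n + noise h n c / total (Suc n))^2)
           \<le> (noise_sum h n)^2 + noise_bound^2 / (total (Suc n))^2"
proof -
  let ?t = "total (Suc n)" and ?P = "\<lambda>c. \<Prod>I\<in>E. choice_prob h n I (c I)"
  have P1: "(\<Sum>c\<in>choices. ?P c) = 1"
    using sum_choice_prob[OF adm] by (intro sum_PiE_prod_eq_1) auto
  have "(noise h n c)^2 \<le> noise_bound^2" for c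
    using abs_noise_le[OF adm, of c] by (metis abs_ge_zero order_trans power2_abs power_mono)
  then have "(\<Sum>c\<in>choices. ?P c * (noise h n c)^2) \<le> (\<Sum>c\<in>choices. ?P c * noise_bound^2)"
    using choice_prob_nonneg by (intro sum_mono mult_left_mono prod_nonneg) auto
  then have sq: "(\<Sum>c\<in>choices. ?P c * (noise h n c)^2) \<le> noise_bound^2"
    using P1 by (simp add: sum_distrib_right[symmetric])
  have "?P c * (noise_sum h n + noise h n c / ?t)^2
        = (noise_sum h n)^2 * ?P c + (2 * noise_sum h n / ?t) * (?P c * noise h n c)
          + (?P c * (noise h n c)^2) / ?t^2" for c
    using total_pos[of "Suc n"] by (simp add: power2_eq_square field_simps)
  then have "(\<Sum>c\<in>choices. ?P c * (noise_sum h n + noise h n c / ?t)^2)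
        = (noise_sum h n)^2 * (\<Sum>c\<in>choices. ?P c)
          + (2 * noise_sum h n / ?t) * (\<Sum>c\<in>choices. ?P c * noise h n c)
          + (\<Sum>c\<in>choices. ?P c * (noise h n c)^2) / ?t^2"
    by (simp add: sum.distrib sum_distrib_left sum_divide_distrib)
  then show ?thesis
    unfolding P1 noise_mean_zero[OF adm] using sq by (simp add: divide_right_mono)
qed

lemma noise_sum_moment2_Suc_le:
  "noise_sum_moment2 (Suc n) \<le> noise_sum_moment2 n + noise_bound^2 / (total (Suc n))^2"
proof -
  let ?t = "total (Suc n)"
  let ?P = "\<lambda>h c. \<Prod>I\<in>E. choice_prob h n I (c I)"
  have "noise_sum_moment2 (Suc n)
      = (\<Sum>h\<in>histories n. path_prob h n * (\<Sum>c\<in>choices. ?P h c * (noise_sum h n + noise h n c / ?t)^2))"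
    unfolding noise_sum_moment2_def sum_histories_Suc path_prob_Suc noise_sum_Suc_update
    by (simp add: sum_distrib_left mult.assoc)
  also have "\<dots> \<le> (\<Sum>h\<in>histories n. path_prob h n * ((noise_sum h n)^2 + noise_bound^2 / ?t^2))"
  proof (intro sum_mono)
    fix h
    show "path_prob h n * (\<Sum>c\<in>choices. ?P h c * (noise_sum h n + noise h n c / ?t)^2)
          \<le> path_prob h n * ((noise_sum h n)^2 + noise_bound^2 / ?t^2)"
    proof (cases "path_prob h n = 0")
      case False
      show ?thesis
        using conditional_moment2_le[OF admissible_if_path_prob_nonzero[OF False]] path_prob_nonneg
        by (rule mult_left_mono)
    qed simp
  qed
  also have "\<dots> = noise_sum_moment2 n + noise_bound^2 / ?t^2"
    unfolding noise_sum_moment2_def distrib_left sum.distrib sum_distrib_right[symmetric] sum_path_prob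
    by simp
  finally show ?thesis .
qed

lemma noise_sum_moment2_le: "noise_sum_moment2 n \<le> 2 * noise_bound^2"
proof -
  have "noise_sum_moment2 n \<le> noise_bound^2 * (\<Sum>k<n. 1 / (total (Suc k))^2)"
  proof (induction n)
    case 0 then show ?case by (simp add: noise_sum_moment2_def histories_0 noise_sum_def)
  next
    case (Suc n) then show ?case using noise_sum_moment2_Suc_le[of n] by (simp add: algebra_simps)
  qed
  also have "\<dots> \<le> noise_bound^2 * 2"
    using sum_inverse_total_sq_le[of n] by (intro mult_left_mono) auto
  finally show ?thesis by simp
qed

end

section \<open>The urn as a random process\<close>

locale polya_urn_process = polya_urn B0 E + prob_space M
  for B0 :: "'v::finite \<Rightarrow> nat" and E and M :: "'w measure" +
  fixes ch :: "nat \<Rightarrow> 'w \<Rightarrow> 'v set \<Rightarrow> 'v"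
  assumes measurable_choice: "\<forall>k\<ge>1. \<forall>I\<in>E. (\<lambda>\<omega>. ch k \<omega> I) \<in> measurable M (count_space UNIV)"
    and path_law: "\<forall>n h. measure M {\<omega> \<in> space M. \<forall>k\<in>{1..n}. \<forall>I\<in>E. ch k \<omega> I = h k I}
                         = urn_path_prob B0 E h n"
begin

abbreviation history :: "'w \<Rightarrow> nat \<Rightarrow> 'v set \<Rightarrow> 'v" where
  "history \<omega> \<equiv> (\<lambda>k. ch k \<omega>)"

definition cylinder :: "nat \<Rightarrow> (nat \<Rightarrow> 'v set \<Rightarrow> 'v) \<Rightarrow> 'w set" where
  "cylinder n h = {\<omega> \<in> space M. \<forall>k\<in>{1..n}. \<forall>I\<in>E. ch k \<omega> I = h k I}"

lemma sets_cylinder: "cylinder n h \<in> sets M"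
  unfolding cylinder_def
proof (intro sets.sets_Collect_finite_All)
  fix k I assume "k \<in> {1..n}" "I \<in> E"
  then have "(\<lambda>\<omega>. ch k \<omega> I) \<in> measurable M (count_space UNIV)"
    using measurable_choice by auto
  then show "{\<omega> \<in> space M. ch k \<omega> I = h k I} \<in> sets M"
    by (rule measurable_sets_Collect) simp
qed auto

lemma measure_cylinder: "measure M (cylinder n h) = path_prob h n"
  unfolding cylinder_def using path_law by auto

lemma history_event_eq:
  assumes "T \<subseteq> histories n"
  shows "{\<omega> \<in> space M. restrict_history n (history \<omega>) \<in> T} = (\<Union>h\<in>T. cylinder n h)"
proof -
  have "restrict_history n (history \<omega>) \<in> T \<longleftrightarrow> (\<exists>h\<in>T. \<forall>k\<in>{1..n}. \<forall>I\<in>E. ch k \<omega> I = h k I)" for \<omega>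
  proof
    assume "restrict_history n (history \<omega>) \<in> T"
    then show "\<exists>h\<in>T. \<forall>k\<in>{1..n}. \<forall>I\<in>E. ch k \<omega> I = h k I"
      using restrict_history_agrees[of n "history \<omega>"] by blast
  next
    assume "\<exists>h\<in>T. \<forall>k\<in>{1..n}. \<forall>I\<in>E. ch k \<omega> I = h k I"
    then obtain h where "h \<in> T" "\<forall>k\<in>{1..n}. \<forall>I\<in>E. ch k \<omega> I = h k I"
      by blast
    then show "restrict_history n (history \<omega>) \<in> T"
      using assms restrict_history_eq_iff[of h n "history \<omega>"] by auto
  qed
  then show ?thesis
    unfolding cylinder_def by auto
qed

lemma history_event:
  assumes "T \<subseteq> histories n"
  shows "{\<omega> \<in> space M. restrict_history n (history \<omega>) \<in> T} \<in> sets M"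
    and "measure M {\<omega> \<in> space M. restrict_history n (history \<omega>) \<in> T} = (\<Sum>h\<in>T. path_prob h n)"
proof -
  have fin: "finite T"
    using assms finite_histories finite_subset by blast
  have "disjoint_family_on (cylinder n) T"
    unfolding disjoint_family_on_def
  proof (intro ballI impI equals0I)
    fix h h' \<omega> assume "h \<in> T" "h' \<in> T" "h \<noteq> h'" "\<omega> \<in> cylinder n h \<inter> cylinder n h'"
    then have "restrict_history n (history \<omega>) = h" "restrict_history n (history \<omega>) = h'"
      using restrict_history_eq_iff assms \<open>h \<in> T\<close> \<open>h' \<in> T\<close> unfolding cylinder_def by auto
    with \<open>h \<noteq> h'\<close> show False
      by simp
  qed
  then have "measure M (\<Union>h\<in>T. cylinder n h) = (\<Sum>h\<in>T. measure M (cylinder n h))"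
    using fin sets_cylinder by (intro finite_measure_finite_Union) auto
  then show "measure M {\<omega> \<in> space M. restrict_history n (history \<omega>) \<in> T} = (\<Sum>h\<in>T. path_prob h n)"
    unfolding history_event_eq[OF assms] measure_cylinder .
  show "{\<omega> \<in> space M. restrict_history n (history \<omega>) \<in> T} \<in> sets M"
    unfolding history_event_eq[OF assms] using fin sets_cylinder by blast
qed

lemma AE_admissible: "AE \<omega> in M. \<forall>n. admissible (history \<omega>) n"
proof (subst AE_all_countable, intro allI)
  fix n
  define T where "T = {h\<in>histories n. \<not> admissible h n}"
  let ?N = "{\<omega> \<in> space M. restrict_history n (history \<omega>) \<in> T}"
  have T: "T \<subseteq> histories n"
    unfolding T_def by auto
  have "measure M ?N = (\<Sum>h\<in>T. path_prob h n)"
    by (rule history_event(2)[OF T])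
  also have "\<dots> = 0"
    unfolding T_def using admissible_if_path_prob_nonzero by (intro sum.neutral) blast
  finally have "measure M ?N = 0" .
  then have "?N \<in> null_sets M"
    using history_event(1)[OF T] by (auto simp: null_sets_def emeasure_eq_measure)
  moreover have "{\<omega> \<in> space M. \<not> admissible (history \<omega>) n} \<subseteq> ?N"
    unfolding T_def using admissible_cong[OF restrict_history_agrees] restrict_history_in by blast
  ultimately show "AE \<omega> in M. admissible (history \<omega>) n"
    by (rule AE_I')
qed

definition exceeds :: "real \<Rightarrow> nat \<Rightarrow> 'w set" where
  "exceeds a n = {\<omega> \<in> space M. \<not> admissible (history \<omega>) n \<or> drift_sum (history \<omega>) n > a}"

lemma exceeds_eq:
  "exceeds a n = {\<omega> \<in> space M. restrict_history n (history \<omega>) \<in> {h\<in>histories n. \<not> admissible h n \<or> drift_sum h n > a}}"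
  unfolding exceeds_def
  using admissible_cong[OF restrict_history_agrees] drift_sum_cong[OF restrict_history_agrees] restrict_history_in
  by auto

lemma sets_exceeds: "exceeds a n \<in> sets M"
  unfolding exceeds_eq by (rule history_event(1)) auto

text \<open>Chebyshev's inequality for the noise sum, via \<open>drift_sum_le\<close>.\<close>
lemma measure_exceeds_le:
  assumes "a > lyap_const"
  shows "measure M (exceeds a n) \<le> 2 * noise_bound^2 / (a - lyap_const)^2"
proof -
  define T where "T = {h\<in>histories n. \<not> admissible h n \<or> drift_sum h n > a}"
  have T: "T \<subseteq> histories n"
    unfolding T_def by auto
  have pos: "(a - lyap_const)^2 > 0"
    using assms by simp
  have "measure M (exceeds a n) = (\<Sum>h\<in>T. path_prob h n)"
    unfolding exceeds_eq T_def[symmetric] by (rule history_event(2)[OF T])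
  also have "\<dots> \<le> (\<Sum>h\<in>T. path_prob h n * (noise_sum h n)^2 / (a - lyap_const)^2)"
  proof (intro sum_mono)
    fix h assume h: "h \<in> T"
    show "path_prob h n \<le> path_prob h n * (noise_sum h n)^2 / (a - lyap_const)^2"
    proof (cases "path_prob h n = 0")
      case False
      then have adm: "admissible h n"
        by (rule admissible_if_path_prob_nonzero)
      then have "a - lyap_const < - noise_sum h n"
        using h drift_sum_le[OF adm] unfolding T_def by auto
      then have "(a - lyap_const)^2 \<le> (noise_sum h n)^2"
        using power_mono[of "a - lyap_const" "- noise_sum h n" 2] assms by simp
      then show ?thesis
        using pos path_prob_nonneg[of h n] by (simp add: field_simps mult_left_mono)
    qed simp
  qed
  also have "\<dots> \<le> (\<Sum>h\<in>histories n. path_prob h n * (noise_sum h n)^2 / (a - lyap_const)^2)"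
    using T finite_histories path_prob_nonneg by (intro sum_mono2) auto
  also have "\<dots> = noise_sum_moment2 n / (a - lyap_const)^2"
    unfolding noise_sum_moment2_def by (simp add: sum_divide_distrib)
  also have "\<dots> \<le> 2 * noise_bound^2 / (a - lyap_const)^2"
    using noise_sum_moment2_le pos by (intro divide_right_mono) auto
  finally show ?thesis .
qed

lemma incseq_exceeds: "incseq (exceeds a)"
proof (rule incseq_SucI, rule subsetI)
  fix n \<omega> assume \<omega>: "\<omega> \<in> exceeds a n"
  show "\<omega> \<in> exceeds a (Suc n)"
  proof (cases "admissible (history \<omega>) (Suc n)")
    case True
    then have "drift_sum (history \<omega>) n \<le> drift_sum (history \<omega>) (Suc n)"
      using drift_sum_mono[OF admissible_mono[OF True, of n]] by simp
    then show ?thesis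
      using \<omega> True admissible_mono[OF True, of n] unfolding exceeds_def by auto
  qed (use \<omega> in \<open>auto simp: exceeds_def\<close>)
qed

lemma measure_ever_exceeds_le:
  assumes "a > lyap_const"
  shows "measure M (\<Union>n. exceeds a n) \<le> 2 * noise_bound^2 / (a - lyap_const)^2"
proof -
  have "(\<lambda>n. measure M (exceeds a n)) \<longlonglongrightarrow> measure M (\<Union>n. exceeds a n)"
    using sets_exceeds incseq_exceeds by (intro finite_Lim_measure_incseq) auto
  then show ?thesis
    by (rule LIMSEQ_le_const2) (use measure_exceeds_le[OF assms] in auto)
qed

lemma null_sets_drift_sum_unbounded:
  "(\<Inter>j. \<Union>n. exceeds (lyap_const + real (Suc j)) n) \<in> null_sets M"
proof -
  let ?Z = "\<Inter>j. \<Union>n. exceeds (lyap_const + real (Suc j)) n"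
  have "measure M ?Z \<le> 2 * noise_bound^2 / real (Suc j)" for j
  proof -
    have "measure M ?Z \<le> measure M (\<Union>n. exceeds (lyap_const + real (Suc j)) n)"
      using sets_exceeds by (intro finite_measure_mono) auto
    also have "\<dots> \<le> 2 * noise_bound^2 / (real (Suc j))^2"
      using measure_ever_exceeds_le[of "lyap_const + real (Suc j)"] by simp
    also have "\<dots> \<le> 2 * noise_bound^2 / real (Suc j)"
      by (intro divide_left_mono) (auto simp: power2_eq_square)
    finally show ?thesis .
  qed
  then have "measure M ?Z \<le> 0"
    using LIMSEQ_le_const[OF LIMSEQ_Suc[OF lim_const_over_n]] by blast
  then have "measure M ?Z = 0"
    using measure_nonneg[of M ?Z] by linarith
  moreover have "?Z \<in> sets M"
    using sets_exceeds by blast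
  ultimately show ?thesis
    by (auto simp: null_sets_def emeasure_eq_measure)
qed

lemma AE_drift_sum_bounded: "AE \<omega> in M. \<exists>B. \<forall>n. drift_sum (history \<omega>) n \<le> B"
proof -
  have "AE \<omega> in M. \<omega> \<notin> (\<Inter>j. \<Union>n. exceeds (lyap_const + real (Suc j)) n)"
    by (rule AE_I'[OF null_sets_drift_sum_unbounded]) auto
  with AE_admissible AE_space show ?thesis
  proof eventually_elim
    case (elim \<omega>)
    then obtain j where "\<forall>n. \<omega> \<notin> exceeds (lyap_const + real (Suc j)) n"
      by blast
    then have "drift_sum (history \<omega>) n \<le> lyap_const + real (Suc j)" for n
      using elim unfolding exceeds_def by (auto simp: not_less)
    then show ?case
      by blast
  qed
qed

lemma AE_limit_set_X:
  assumes "0 < c" "c < 1 / NE"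
  shows "AE \<omega> in M. limit_set (X (history \<omega>)) \<subseteq> Lambda E c \<and> connected (limit_set (X (history \<omega>)))"
  using AE_admissible AE_drift_sum_bounded
proof eventually_elim
  case (elim \<omega>)
  then show ?case
    using limit_set_X_subset_Lambda[OF assms] connected_limit_set[OF bounded_range_X X_small_steps] by blast
qed

end

theorem proposition2p4:
  fixes M :: "'w measure"
    and E :: "('v::finite) set set"
    and B0 :: "'v \<Rightarrow> nat"
    and ch :: "nat \<Rightarrow> 'w \<Rightarrow> 'v set \<Rightarrow> 'v"
    and c :: real
  assumes "prob_space M"
    and "E \<noteq> {}"
    and "\<forall>I\<in>E. I \<noteq> {}"
    and "\<forall>i. \<exists>I\<in>E. i \<in> I"
    and "\<forall>i. B0 i \<ge> 1"
    and "0 < c" and "c < 1 / real (card E)"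
    and "\<forall>k\<ge>1. \<forall>I\<in>E. (\<lambda>\<omega>. ch k \<omega> I) \<in> measurable M (count_space UNIV)"
    and "\<forall>n h. measure M {\<omega> \<in> space M. \<forall>k\<in>{1..n}. \<forall>I\<in>E. ch k \<omega> I = h k I}
               = urn_path_prob B0 E h n"
  shows "AE \<omega> in M. limit_set (\<lambda>n. urn_x B0 E (\<lambda>k. ch k \<omega>) n) \<subseteq> Lambda E c
                  \<and> connected (limit_set (\<lambda>n. urn_x B0 E (\<lambda>k. ch k \<omega>) n))"
proof -
  interpret polya_urn_process B0 E M ch
    using assms by (intro polya_urn_process.intro polya_urn.intro polya_urn_process_axioms.intro) auto
  show ?thesis
    using AE_limit_set_X[OF assms(6)] assms(7) unfolding NE_def by simp
qed

end
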